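(* Let $A:\mathbb{R}^d\rightrightarrows\mathbb{R}^d$ be maximally monotone, $B:\mathbb{R}^d\to\mathbb{R}^d$ $L_B$-Lipschitz and $\mu$-strongly monotone ($\mu>0$), $z^\star\in(A+B)^{-1}(0)$, and $\widetilde B$ a stochastic oracle with $\mathbb{E}[\widetilde B(x)]=B(x)$, $\mathbb{E}\|\widetilde B(x)-B(x)\|^2\le\sigma^2$. Let $N\ge2$ and let $y^{\mathrm{out}}$ be the output of the MLMC estimator described in the context started at $z_0$. Then $$\|\mathbb{E}[y^{\mathrm{out}}]-z^\star\|^2\le\frac{\frac{12L_B}{\mu}\|z_0-z^\star\|^2+\frac{96\sigma^2}{\mu^2}}{N},\qquad\mathbb{E}\|y^{\mathrm{out}}-z^\star\|^2\le14\Big(\frac{6L_B}{\mu}\|z_0-z^\star\|^2+\frac{48\sigma^2}{\mu^2}\Big)\log_2N,$$ and the expected number of calls to $\widetilde B$ is $O(\log_2N)$.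
   Context: For an operator $A$, $J_A=(\mathrm{Id}+A)^{-1}$. Stochastic FBF run for $T$ iterations from $z_0$: with $\tau_t=\frac{2}{(t+1)\mu+6L_B}$, for $t=0,\dots,T-1$: $z_{t+1/2}=J_{\tau_tA}(z_t-\tau_t\widetilde B(z_t))$, $z_{t+1}=z_{t+1/2}+\tau_t\widetilde B(z_t)-\tau_t\widetilde B(z_{t+1/2})$, with independent oracle samples; output $z_T$. MLMC estimator: let $y^i$ be the output of stochastic FBF run for $2^i$ iterations from $z_0$ ($i\ge0$); draw $I$ with $\Pr(I=i)=2^{-i}$ for $i=1,2,\dots$; set $y^{\mathrm{out}}=y^0+2^I(y^I-y^{I-1})$ if $2^I\le N$, and $y^{\mathrm{out}}=y^0$ otherwise. *)

theory Defs
  imports "HOL-Analysis.Analysis" "HOL-Probability.Probability"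
begin

definition monotone_op :: "('a::real_inner \<Rightarrow> 'a set) \<Rightarrow> bool" where
  "monotone_op A \<longleftrightarrow> (\<forall>x y u v. u \<in> A x \<longrightarrow> v \<in> A y \<longrightarrow> inner (u - v) (x - y) \<ge> 0)"

definition maximal_monotone :: "('a::real_inner \<Rightarrow> 'a set) \<Rightarrow> bool" where
  "maximal_monotone A \<longleftrightarrow> monotone_op A \<and>
     (\<forall>A'. monotone_op A' \<and> (\<forall>x. A x \<subseteq> A' x) \<longrightarrow> A' = A)"

definition strongly_monotone :: "real \<Rightarrow> ('a::real_inner \<Rightarrow> 'a) \<Rightarrow> bool" where
  "strongly_monotone \<mu> B \<longleftrightarrow> (\<forall>x y. inner (B x - B y) (x - y) \<ge> \<mu> * (norm (x - y))\<^sup>2)"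

definition scale_op :: "real \<Rightarrow> ('a::real_vector \<Rightarrow> 'a set) \<Rightarrow> 'a \<Rightarrow> 'a set" where
  "scale_op \<tau> A = (\<lambda>z. (\<lambda>u. \<tau> *\<^sub>R u) ` A z)"

text \<open>Resolvent J_A = (Id + A)^{-1}: J_A x is the point p with x \<in> p + A p
  (single-valued and everywhere defined for maximally monotone A).\<close>
definition resolvent :: "('a::real_vector \<Rightarrow> 'a set) \<Rightarrow> 'a \<Rightarrow> 'a" where
  "resolvent A x = (THE p. x - p \<in> A p)"

definition fbf_step :: "nat \<Rightarrow> real \<Rightarrow> real \<Rightarrow> real" where
  "fbf_step t \<mu> L = 2 / ((real t + 1) * \<mu> + 6 * L)"

text \<open>The oracle is Bt x w, where w is a sample; the sample sequence
  \<xi> supplies independent samples: \<xi>(2t) for the call at z_t and \<xi>(2t+1) for the call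
  at z_{t+1/2}.\<close>
primrec fbf :: "('a::real_vector \<Rightarrow> 'a set) \<Rightarrow> ('a \<Rightarrow> 'w \<Rightarrow> 'a) \<Rightarrow> real \<Rightarrow> real
    \<Rightarrow> 'a \<Rightarrow> (nat \<Rightarrow> 'w) \<Rightarrow> nat \<Rightarrow> 'a" where
  "fbf A Bt \<mu> L z0 \<xi> 0 = z0"
| "fbf A Bt \<mu> L z0 \<xi> (Suc t) =
     (let z = fbf A Bt \<mu> L z0 \<xi> t;
          \<tau> = fbf_step t \<mu> L;
          g = Bt z (\<xi> (2 * t));
          zh = resolvent (scale_op \<tau> A) (z - \<tau> *\<^sub>R g)
      in zh + \<tau> *\<^sub>R g - \<tau> *\<^sub>R Bt zh (\<xi> (2 * t + 1)))"

text \<open>Distribution of the level I: Pr(I = i) = 2^(-i) for i = 1, 2, ...\<close>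
definition level_pmf :: "nat pmf" where
  "level_pmf = map_pmf Suc (geometric_pmf (1/2))"

text \<open>MLMC output for level i and sample sequence \<xi>; y^i is the output of FBF run
  for 2^i iterations from z0 (all y^i computed along the same sample path).\<close>
definition mlmc_out :: "('a::real_vector \<Rightarrow> 'a set) \<Rightarrow> ('a \<Rightarrow> 'w \<Rightarrow> 'a) \<Rightarrow> real \<Rightarrow> real
    \<Rightarrow> 'a \<Rightarrow> nat \<Rightarrow> nat \<Rightarrow> (nat \<Rightarrow> 'w) \<Rightarrow> 'a" where
  "mlmc_out A Bt \<mu> L z0 N i \<xi> =
     (let y = (\<lambda>k. fbf A Bt \<mu> L z0 \<xi> (2 ^ k))
      in if 2 ^ i \<le> N then y 0 + (2 ^ i :: real) *\<^sub>R (y i - y (i - 1)) else y 0)"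

text \<open>Number of oracle calls of the MLMC estimator at level i (2 calls per FBF
  iteration; running 2^I iterations also produces y^0 and y^(I-1) as prefixes).\<close>
definition mlmc_calls :: "nat \<Rightarrow> nat \<Rightarrow> nat" where
  "mlmc_calls N i = (if 2 ^ i \<le> N then 2 * 2 ^ i else 2)"

definition mlmc_space :: "'w measure \<Rightarrow> (nat \<times> (nat \<Rightarrow> 'w)) measure" where
  "mlmc_space P = measure_pmf level_pmf \<Otimes>\<^sub>M (\<Pi>\<^sub>M t\<in>UNIV. P)"

end

(* Each step of stochastic FBF contracts the mean squared distance to the solution: monotonicity
   of A at the resolvent point together with strong monotonicity and Lipschitz continuity of B give
   E|z_{t+1} - z*|^2 <= (1 - tau_t mu) E|z_t - z*|^2 + 3 tau_t^2 sigma^2, and for the step sizes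
   tau_t = 2 / ((t + 1) mu + 6 L) this recursion yields E|z_T - z*|^2 <= C / T with
   C = 6 L / mu |z0 - z*|^2 + 48 sigma^2 / mu^2.
   In expectation the MLMC estimator telescopes to y^K, where 2^K <= N < 2^(K+1), so by Jensen's
   inequality its bias is at most C / 2^K <= 2 C / N.  Each of the K <= log2 N active levels i
   contributes 2^(-i) 4^i E|y^i - y^(i-1)|^2 = O(C) to the second moment and 2^(-i) 2^(i+1) = 2 to
   the expected cost.  The resolvent is well defined by Minty's theorem, which follows from
   Brouwer's fixed point theorem. *)

theory Submission
  imports Defs
begin

section \<open>Minty's theorem and the resolvent\<close>

lemma monotone_weighted_double_sum_nonpos:
  fixes y v :: "'i \<Rightarrow> 'a::real_inner"
  assumes "finite F" and m: "\<And>i. i \<in> F \<Longrightarrow> m i \<ge> (0::real)"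
    and mono: "\<And>i j. i \<in> F \<Longrightarrow> j \<in> F \<Longrightarrow> inner (v i - v j) (y i - y j) \<ge> 0"
  shows "(\<Sum>i\<in>F. \<Sum>j\<in>F. m i * m j * inner (v i) (y j - y i)) \<le> 0"
proof -
  let ?S = "\<Sum>i\<in>F. \<Sum>j\<in>F. m i * m j * inner (v i) (y j - y i)"
  have "2 * ?S = ?S + (\<Sum>i\<in>F. \<Sum>j\<in>F. m j * m i * inner (v j) (y i - y j))"
    by (subst sum.swap) simp
  also have "\<dots> = (\<Sum>i\<in>F. \<Sum>j\<in>F. - (m i * m j * inner (v i - v j) (y i - y j)))"
    by (simp add: sum.distrib[symmetric] algebra_simps)
  also have "\<dots> \<le> 0"
    by (intro sum_nonpos) (simp add: m mono)
  finally show ?thesis by simp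
qed

lemma convex_weighted_average_mem:
  assumes K: "convex K" "p \<in> K" and F: "finite F"
    and y: "\<And>i. i \<in> F \<Longrightarrow> y i \<in> K" and m: "\<And>i. i \<in> F \<Longrightarrow> m i \<ge> (0::real)"
  shows "inverse (1 + (\<Sum>i\<in>F. m i)) *\<^sub>R (p + (\<Sum>i\<in>F. m i *\<^sub>R y i)) \<in> K"
proof -
  define s where "s = (\<Sum>i\<in>F. m i)"
  have "s \<ge> 0"
    unfolding s_def using m by (simp add: sum_nonneg)
  show ?thesis
  proof (cases "s = 0")
    case True
    then have "\<forall>i\<in>F. m i = 0"
      using F m unfolding s_def by (simp add: sum_nonneg_eq_0_iff)
    then show ?thesis
      using True K by (simp add: s_def)
  next
    case False
    then have s: "s > 0"
      using \<open>s \<ge> 0\<close> by simp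
    define q where "q = (\<Sum>i\<in>F. (m i / s) *\<^sub>R y i)"
    have "q \<in> K"
      unfolding q_def using s m y
      by (intro convex_sum[OF F K(1)]) (auto simp: sum_divide_distrib[symmetric] s_def)
    moreover have "inverse (1 + s) *\<^sub>R (p + (\<Sum>i\<in>F. m i *\<^sub>R y i))
        = (1 / (1 + s)) *\<^sub>R p + (s / (1 + s)) *\<^sub>R q"
      using s unfolding q_def
      by (simp add: scaleR_add_right scaleR_sum_right divide_inverse)
         (intro sum.cong refl, simp add: field_simps)
    moreover have "1 / (1 + s) + s / (1 + s) = 1"
      using s by (simp add: field_simps)
    ultimately show ?thesis
      using convexD[OF K] s unfolding s_def by simp
  qed
qed

text \<open>Brouwer's theorem applied to \<open>p \<mapsto> (p + \<Sum>\<^sub>i m\<^sub>i(p) y\<^sub>i) / (1 + \<Sum>\<^sub>i m\<^sub>i(p))\<close>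
  on the convex hull of the \<open>y\<^sub>i\<close>.\<close>
lemma exists_weighted_balance_point:
  fixes y :: "'i \<Rightarrow> 'a::euclidean_space" and m :: "'i \<Rightarrow> 'a \<Rightarrow> real"
  assumes F: "finite F" "F \<noteq> {}"
    and cont: "\<And>i. continuous_on UNIV (m i)" and m0: "\<And>i p. m i p \<ge> 0"
  shows "\<exists>p. (\<Sum>i\<in>F. m i p *\<^sub>R (p - y i)) = 0"
proof -
  define K where "K = convex hull (y ` F)"
  define s where "s p = (\<Sum>i\<in>F. m i p)" for p
  define f where "f p = inverse (1 + s p) *\<^sub>R (p + (\<Sum>i\<in>F. m i p *\<^sub>R y i))" for p
  have s0: "s p \<ge> 0" for p
    unfolding s_def by (intro sum_nonneg m0)
  have K: "compact K" "convex K" "K \<noteq> {}"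
    using F by (auto simp: K_def compact_convex_hull finite_imp_compact)
  have cm: "continuous_on K (m i)" for i
    using cont continuous_on_subset by blast
  have "continuous_on K s"
    unfolding s_def by (intro continuous_on_sum cm)
  then have "continuous_on K f"
    unfolding f_def using s0 by (intro continuous_intros cm) (auto simp: add_nonneg_eq_0_iff)
  moreover have "f p \<in> K" if "p \<in> K" for p
    unfolding f_def s_def using that F(1) m0
    by (intro convex_weighted_average_mem) (auto simp: K_def hull_inc)
  ultimately obtain p where fp: "f p = p"
    using brouwer[OF K] by blast
  have "(1 + s p) *\<^sub>R f p = p + (\<Sum>i\<in>F. m i p *\<^sub>R y i)"
    unfolding f_def using s0[of p] by simp
  then have "(1 + s p) *\<^sub>R p = p + (\<Sum>i\<in>F. m i p *\<^sub>R y i)"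
    by (simp only: fp)
  then have "(\<Sum>i\<in>F. m i p *\<^sub>R (p - y i)) = 0"
    by (simp add: scaleR_diff_right sum_subtractf s_def scaleR_sum_left algebra_simps)
  then show ?thesis ..
qed

lemma barycenter_monotone_inner_nonpos:
  fixes y v :: "'i \<Rightarrow> 'a::real_inner"
  assumes F: "finite F" and m: "\<And>i. i \<in> F \<Longrightarrow> m i \<ge> (0::real)"
    and mono: "\<And>i j. i \<in> F \<Longrightarrow> j \<in> F \<Longrightarrow> inner (v i - v j) (y i - y j) \<ge> 0"
    and barycenter: "(\<Sum>i\<in>F. m i) *\<^sub>R p = (\<Sum>j\<in>F. m j *\<^sub>R y j)"
  shows "(\<Sum>i\<in>F. m i) * (\<Sum>i\<in>F. m i * inner (v i) (p - y i)) \<le> 0"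
proof -
  define s where "s = (\<Sum>i\<in>F. m i)"
  have "s * (\<Sum>i\<in>F. m i * inner (v i) (p - y i)) = (\<Sum>i\<in>F. m i * inner (v i) (s *\<^sub>R p - s *\<^sub>R y i))"
    by (simp add: sum_distrib_left inner_diff_right algebra_simps)
  also have "\<dots> = (\<Sum>i\<in>F. m i * inner (v i) ((\<Sum>j\<in>F. m j *\<^sub>R y j) - s *\<^sub>R y i))"
    by (simp only: barycenter s_def)
  also have "\<dots> = (\<Sum>i\<in>F. \<Sum>j\<in>F. m i * m j * inner (v i) (y j - y i))"
    by (simp add: s_def scaleR_sum_left sum_subtractf[symmetric] scaleR_diff_right[symmetric]
        inner_sum_right sum_distrib_left mult.assoc)
  also have "\<dots> \<le> 0"
    by (rule monotone_weighted_double_sum_nonpos[OF F m mono])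
  finally show ?thesis
    unfolding s_def .
qed

text \<open>The weights \<open>max 0 g\<^sub>i\<close> of the violated inequalities \<open>g\<^sub>i(p) \<le> 0\<close> have a balance
  point, and there \<open>\<Sum>\<^sub>i m\<^sub>i g\<^sub>i = c \<Sum>\<^sub>i m\<^sub>i \<langle>v\<^sub>i, p - y\<^sub>i\<rangle> \<le> 0\<close> by monotonicity,
  so no inequality is violated.\<close>
lemma monotone_finite_variational_solution:
  fixes y v :: "'i \<Rightarrow> 'a::euclidean_space"
  assumes F: "finite F" "F \<noteq> {}" and c: "c > 0"
    and mono: "\<And>i j. i \<in> F \<Longrightarrow> j \<in> F \<Longrightarrow> inner (v i - v j) (y i - y j) \<ge> 0"
  shows "\<exists>p. \<forall>i\<in>F. inner (p + c *\<^sub>R v i - x) (p - y i) \<le> 0"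
proof -
  define g where "g i p = inner (p + c *\<^sub>R v i - x) (p - y i)" for i p
  define m where "m i p = max 0 (g i p)" for i p
  have m0: "m i p \<ge> 0" for i p
    by (simp add: m_def)
  have "continuous_on UNIV (m i)" for i
    unfolding m_def g_def by (intro continuous_intros)
  then obtain p where bal: "(\<Sum>i\<in>F. m i p *\<^sub>R (p - y i)) = 0"
    using exists_weighted_balance_point[OF F, of m y] m0 by blast
  define s where "s = (\<Sum>i\<in>F. m i p)"
  have "s *\<^sub>R p = (\<Sum>j\<in>F. m j p *\<^sub>R y j)"
    using bal by (simp add: scaleR_diff_right sum_subtractf s_def scaleR_sum_left)
  then have v_part: "s * (\<Sum>i\<in>F. m i p * inner (v i) (p - y i)) \<le> 0"
    unfolding s_def by (intro barycenter_monotone_inner_nonpos[of F "\<lambda>i. m i p"] F(1) m0 mono)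
  have "(\<Sum>i\<in>F. m i p * g i p)
      = inner (p - x) (\<Sum>i\<in>F. m i p *\<^sub>R (p - y i)) + c * (\<Sum>i\<in>F. m i p * inner (v i) (p - y i))"
    unfolding g_def
    by (simp add: inner_sum_right sum.distrib[symmetric] sum_distrib_left inner_add_left algebra_simps)
  then have "s * (\<Sum>i\<in>F. m i p * g i p) \<le> 0"
    using bal v_part c by (simp add: algebra_simps mult_nonneg_nonpos)
  moreover have "m i p * g i p = m i p * m i p" for i
    by (simp add: m_def max_def)
  ultimately have nonpos: "s * (\<Sum>i\<in>F. m i p * m i p) \<le> 0"
    by simp
  have "\<forall>i\<in>F. m i p = 0"
  proof (rule ccontr)
    assume "\<not> (\<forall>i\<in>F. m i p = 0)"
    then obtain k where "k \<in> F" "m k p \<noteq> 0"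
      by blast
    then have k: "k \<in> F" "m k p > 0"
      using m0[of k p] by auto
    then have "m k p \<le> s" "m k p * m k p \<le> (\<Sum>i\<in>F. m i p * m i p)"
      unfolding s_def using F(1) m0 by (auto intro!: member_le_sum)
    then show False
      using nonpos k(2) by (smt (verit) mult_pos_pos)
  qed
  then show ?thesis
    unfolding m_def g_def by (metis max.cobounded2)
qed

lemma maximal_monotone_graph_nonempty:
  assumes "maximal_monotone A"
  shows "\<exists>y v. v \<in> A y"
proof (rule ccontr)
  assume "\<nexists>y v. v \<in> A y"
  moreover have "monotone_op (\<lambda>_. {0})"
    by (simp add: monotone_op_def)
  ultimately have "(\<lambda>_. {0}) = A"
    using assms unfolding maximal_monotone_def by blast
  then show False
    using \<open>\<nexists>y v. v \<in> A y\<close> by blast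
qed

lemma maximal_monotone_memI:
  assumes mm: "maximal_monotone A"
    and rel: "\<And>y v. v \<in> A y \<Longrightarrow> inner (u - v) (p - y) \<ge> 0"
  shows "u \<in> A p"
proof -
  define A' where "A' y = (if y = p then insert u (A p) else A y)" for y
  have mono: "monotone_op A"
    using mm by (simp add: maximal_monotone_def)
  have "inner (u1 - v1) (x1 - y1) \<ge> 0" if "u1 \<in> A' x1" "v1 \<in> A' y1" for x1 y1 u1 v1
  proof -
    have "inner (u - v) (p - y) \<ge> 0" "inner (v - u) (y - p) \<ge> 0" if "v \<in> A y" for y v
      using rel[OF that] by (simp_all add: inner_diff_left inner_diff_right algebra_simps)
    then show ?thesis
      using that mono unfolding A'_def monotone_op_def by (auto split: if_splits)
  qed
  then have "monotone_op A'"
    by (simp add: monotone_op_def)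
  moreover have "\<forall>y. A y \<subseteq> A' y"
    by (auto simp: A'_def)
  ultimately have "A' = A"
    using mm by (simp add: maximal_monotone_def)
  then show ?thesis
    by (metis A'_def insertI1)
qed

lemma bounded_inner_add_diff_nonpos:
  fixes a b :: "'a::real_inner"
  shows "bounded {p. inner (p + a) (p - b) \<le> 0}"
proof -
  have "{p. inner (p + a) (p - b) \<le> 0} \<subseteq> cball (- ((a - b) /\<^sub>R 2)) (norm ((a + b) /\<^sub>R 2))"
  proof
    fix p assume "p \<in> {p. inner (p + a) (p - b) \<le> 0}"
    moreover have "inner (p + a) (p - b) = (norm (p + (a - b) /\<^sub>R 2))\<^sup>2 - (norm ((a + b) /\<^sub>R 2))\<^sup>2"
      by (simp add: power2_norm_eq_inner inner_add_left inner_add_right inner_diff_left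
          inner_diff_right inner_commute algebra_simps)
    ultimately have "(norm (p + (a - b) /\<^sub>R 2))\<^sup>2 \<le> (norm ((a + b) /\<^sub>R 2))\<^sup>2"
      by simp
    then show "p \<in> cball (- ((a - b) /\<^sub>R 2)) (norm ((a + b) /\<^sub>R 2))"
      unfolding mem_cball dist_norm norm_minus_commute[of "- _"] diff_minus_eq_add
      using power2_le_imp_le norm_ge_zero by blast
  qed
  then show ?thesis
    using bounded_cball bounded_subset by blast
qed

text \<open>Each graph point \<open>(y, v)\<close> of \<open>A\<close> cuts out a
  compact ball of candidates \<open>p\<close>; these balls have the finite intersection property, and a
  common point is monotonically related to the whole graph.\<close>
lemma maximal_monotone_surj:
  fixes A :: "'a::euclidean_space \<Rightarrow> 'a set"
  assumes mm: "maximal_monotone A" and c: "c > 0"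
  obtains p u where "u \<in> A p" "x - p = c *\<^sub>R u"
proof -
  have mono: "monotone_op A"
    using mm by (simp add: maximal_monotone_def)
  define G where "G = {(y, v). v \<in> A y}"
  define S where "S e = {p. inner (p + c *\<^sub>R snd e - x) (p - fst e) \<le> 0}" for e
  obtain e0 where e0: "e0 \<in> G"
    using maximal_monotone_graph_nonempty[OF mm] by (auto simp: G_def)
  have bounded: "bounded (S e)" for e
    using bounded_inner_add_diff_nonpos[of "c *\<^sub>R snd e - x" "fst e"] by (simp add: S_def add_diff_eq)
  have closed: "closed (S e)" for e
    unfolding S_def by (intro closed_Collect_le continuous_intros)
  have "\<Inter> (S ` G) \<noteq> {}"
  proof (rule closed_fip_Heine_Borel)
    fix F' assume "finite F'" "F' \<subseteq> S ` G"
    then obtain F where F: "F \<subseteq> G" "finite F" "F' = S ` F"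
      by (meson finite_subset_image)
    show "\<Inter> F' \<noteq> {}"
    proof (cases "F = {}")
      case False
      have "inner (snd i - snd j) (fst i - fst j) \<ge> 0" if "i \<in> F" "j \<in> F" for i j
      proof -
        have "snd i \<in> A (fst i)" "snd j \<in> A (fst j)"
          using that F(1) by (auto simp: G_def)
        then show ?thesis
          using mono by (simp add: monotone_op_def)
      qed
      then obtain p where "\<forall>i\<in>F. inner (p + c *\<^sub>R snd i - x) (p - fst i) \<le> 0"
        using monotone_finite_variational_solution[OF F(2) False c] by blast
      then show ?thesis
        using F by (auto simp: S_def)
    qed (use F in simp)
  qed (use e0 bounded closed in blast)+
  then obtain p where p: "\<And>e. e \<in> G \<Longrightarrow> p \<in> S e"
    by blast
  define u where "u = (1 / c) *\<^sub>R (x - p)"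
  have xpu: "x - p = c *\<^sub>R u"
    using c by (simp add: u_def)
  have "inner (u - v) (p - y) \<ge> 0" if "v \<in> A y" for y v
  proof -
    have "inner (p + c *\<^sub>R v - x) (p - y) \<le> 0"
      using p[of "(y, v)"] that by (simp add: G_def S_def)
    moreover have "p + c *\<^sub>R v - x = - (c *\<^sub>R (u - v))"
      using xpu by (simp add: algebra_simps)
    ultimately show ?thesis
      using c by (simp add: zero_le_mult_iff)
  qed
  then have "u \<in> A p"
    by (rule maximal_monotone_memI[OF mm])
  then show ?thesis
    using that xpu by blast
qed

lemma monotone_op_resolvent_dist_le:
  fixes A :: "'a::real_inner \<Rightarrow> 'a set"
  assumes mono: "monotone_op A" and c: "c > 0"
    and 1: "u1 \<in> A p1" "x1 - p1 = c *\<^sub>R u1" and 2: "u2 \<in> A p2" "x2 - p2 = c *\<^sub>R u2"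
  shows "norm (p1 - p2) \<le> norm (x1 - x2)"
proof -
  have "inner (c *\<^sub>R (u1 - u2)) (p1 - p2) \<ge> 0"
    using mono 1 2 c by (simp add: monotone_op_def)
  moreover have "c *\<^sub>R (u1 - u2) = (x1 - x2) - (p1 - p2)"
    using 1 2 by (simp add: algebra_simps)
  ultimately have "(norm (p1 - p2))\<^sup>2 \<le> inner (x1 - x2) (p1 - p2)"
    by (simp add: inner_diff_left power2_norm_eq_inner)
  also have "\<dots> \<le> norm (x1 - x2) * norm (p1 - p2)"
    by (rule norm_cauchy_schwarz)
  finally show ?thesis
    by (cases "p1 = p2") (auto simp: power2_eq_square mult_le_cancel_right)
qed

lemma resolvent_scale_opE:
  fixes A :: "'a::euclidean_space \<Rightarrow> 'a set"
  assumes mm: "maximal_monotone A" and c: "c > 0"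
  obtains u where "u \<in> A (resolvent (scale_op c A) x)" "x - resolvent (scale_op c A) x = c *\<^sub>R u"
proof -
  have mono: "monotone_op A"
    using mm by (simp add: maximal_monotone_def)
  have graph: "x - p \<in> scale_op c A p \<longleftrightarrow> (\<exists>u\<in>A p. x - p = c *\<^sub>R u)" for p
    by (auto simp: scale_op_def)
  have unique: "p1 = p2" if sol: "\<exists>u\<in>A p1. x - p1 = c *\<^sub>R u" "\<exists>u\<in>A p2. x - p2 = c *\<^sub>R u" for p1 p2
  proof -
    obtain u1 u2 where "u1 \<in> A p1" "x - p1 = c *\<^sub>R u1" "u2 \<in> A p2" "x - p2 = c *\<^sub>R u2"
      using sol by blast
    then have "norm (p1 - p2) \<le> norm (x - x)"
      by (rule monotone_op_resolvent_dist_le[OF mono c])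
    then show ?thesis
      by simp
  qed
  obtain p u where "u \<in> A p" "x - p = c *\<^sub>R u"
    using maximal_monotone_surj[OF mm c] .
  then have "\<exists>!p. x - p \<in> scale_op c A p"
    unfolding graph using unique by blast
  then have "x - resolvent (scale_op c A) x \<in> scale_op c A (resolvent (scale_op c A) x)"
    unfolding resolvent_def by (rule theI')
  then show ?thesis
    using that unfolding graph by blast
qed

lemma resolvent_nonexpansive:
  fixes A :: "'a::euclidean_space \<Rightarrow> 'a set"
  assumes mm: "maximal_monotone A" and c: "c > 0"
  shows "dist (resolvent (scale_op c A) x1) (resolvent (scale_op c A) x2) \<le> dist x1 x2"
proof -
  have mono: "monotone_op A"
    using mm by (simp add: maximal_monotone_def)
  obtain u1 where 1: "u1 \<in> A (resolvent (scale_op c A) x1)" "x1 - resolvent (scale_op c A) x1 = c *\<^sub>R u1"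
    using resolvent_scale_opE[OF mm c] .
  obtain u2 where 2: "u2 \<in> A (resolvent (scale_op c A) x2)" "x2 - resolvent (scale_op c A) x2 = c *\<^sub>R u2"
    using resolvent_scale_opE[OF mm c] .
  show ?thesis
    unfolding dist_norm by (rule monotone_op_resolvent_dist_le[OF mono c 1 2])
qed

lemma continuous_on_resolvent:
  fixes A :: "'a::euclidean_space \<Rightarrow> 'a set"
  assumes "maximal_monotone A" and "c > 0"
  shows "continuous_on UNIV (resolvent (scale_op c A))"
  using resolvent_nonexpansive[OF assms]
  by (intro lipschitz_on_continuous_on[of 1]) (simp add: lipschitz_on_def)

section \<open>Second moments and sample sequences\<close>

lemma norm_add_sq_le:
  fixes a b :: "'a::real_normed_vector"
  shows "(norm (a + b))\<^sup>2 \<le> 2 * (norm a)\<^sup>2 + 2 * (norm b)\<^sup>2"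
proof -
  have "(norm (a + b))\<^sup>2 \<le> (norm a + norm b)\<^sup>2"
    by (simp add: norm_triangle_ineq power_mono)
  also have "\<dots> \<le> 2 * (norm a)\<^sup>2 + 2 * (norm b)\<^sup>2"
    using sum_squares_bound[of "norm a" "norm b"] by (simp add: power2_sum)
  finally show ?thesis .
qed

lemma norm_add_scaleR_sq:
  fixes d w :: "'a::real_inner"
  shows "(norm (d + t *\<^sub>R w))\<^sup>2 = (norm d)\<^sup>2 + 2 * t * inner w d + t\<^sup>2 * (norm w)\<^sup>2"
proof -
  have "inner (d + t *\<^sub>R w) (d + t *\<^sub>R w) = inner d d + 2 * t * inner w d + t\<^sup>2 * inner w w"
    by (simp add: inner_add_left inner_add_right inner_commute power2_eq_square algebra_simps)
  then show ?thesis
    by (metis power2_norm_eq_inner)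
qed

context prob_space
begin

lemma integrable_of_nn_integral_sq_dist:
  fixes f :: "_ \<Rightarrow> 'b::euclidean_space"
  assumes f: "f \<in> borel_measurable M"
    and fin: "(\<integral>\<^sup>+x. ennreal ((norm (f x - c))\<^sup>2) \<partial>M) < \<infinity>"
  shows "integrable M f" and "integrable M (\<lambda>x. (norm (f x - c))\<^sup>2)"
proof -
  have fc: "(\<lambda>x. f x - c) \<in> borel_measurable M"
    using f by measurable
  show sq: "integrable M (\<lambda>x. (norm (f x - c))\<^sup>2)"
  proof (rule integrable_iff_bounded[THEN iffD2], intro conjI)
    show "(\<lambda>x. (norm (f x - c))\<^sup>2) \<in> borel_measurable M"
      using fc by measurable
    show "(\<integral>\<^sup>+x. ennreal (norm ((norm (f x - c))\<^sup>2)) \<partial>M) < \<infinity>"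
      using fin by simp
  qed
  have "integrable M (\<lambda>x. norm (f x - c))"
    by (rule square_integrable_imp_integrable[OF _ sq]) (use fc in measurable)
  then have "integrable M (\<lambda>x. f x - c)"
    using integrable_norm_iff[OF fc] by blast
  then have "integrable M (\<lambda>x. (f x - c) + c)"
    by (rule Bochner_Integration.integrable_add) simp
  then show "integrable M f"
    by simp
qed

lemma norm_integral_sq_le:
  fixes f :: "_ \<Rightarrow> 'b::euclidean_space"
  assumes f: "integrable M f" and sq: "integrable M (\<lambda>x. (norm (f x))\<^sup>2)"
  shows "(norm (integral\<^sup>L M f))\<^sup>2 \<le> (\<integral>x. (norm (f x))\<^sup>2 \<partial>M)"
proof -
  have "(norm (integral\<^sup>L M f))\<^sup>2 \<le> (\<integral>x. norm (f x) \<partial>M)\<^sup>2"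
    by (intro power_mono integral_norm_bound) simp
  also have "\<dots> \<le> (\<integral>x. (norm (f x))\<^sup>2 \<partial>M)"
    using f sq by (intro jensens_inequality[where I = UNIV and q = power2]) (auto simp: convex_power2)
  finally show ?thesis .
qed

lemma nn_integral_norm_sq_le_bias_variance:
  fixes X :: "_ \<Rightarrow> 'b::euclidean_space"
  assumes X: "integrable M X" and v: "v \<ge> 0"
    and var: "(\<integral>\<^sup>+w. ennreal ((norm (X w - expectation X))\<^sup>2) \<partial>M) \<le> ennreal v"
  shows "(\<integral>\<^sup>+w. ennreal ((norm (a + X w))\<^sup>2) \<partial>M) \<le> ennreal ((norm (a + expectation X))\<^sup>2 + v)"
proof -
  define b where "b = a + expectation X"
  define D where "D w = X w - expectation X" for w
  have D: "integrable M D" "expectation D = 0"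
    unfolding D_def using X by (auto simp: prob_space)
  have D2: "integrable M (\<lambda>w. (norm (D w))\<^sup>2)"
    using var X unfolding D_def
    by (intro integrable_of_nn_integral_sq_dist(2)) (auto simp: le_less_trans)
  have "ennreal (\<integral>w. (norm (D w))\<^sup>2 \<partial>M) = (\<integral>\<^sup>+w. ennreal ((norm (D w))\<^sup>2) \<partial>M)"
    using D2 by (intro nn_integral_eq_integral[symmetric]) auto
  also have "\<dots> \<le> ennreal v"
    using var by (simp add: D_def)
  finally have var_le: "(\<integral>w. (norm (D w))\<^sup>2 \<partial>M) \<le> v"
    using v by (simp add: ennreal_le_iff)
  have pointwise: "(norm (a + X w))\<^sup>2 = (norm b)\<^sup>2 + 2 * inner (D w) b + (norm (D w))\<^sup>2" for w
  proof -
    have "a + X w = b + D w"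
      by (simp add: b_def D_def)
    then show ?thesis
      by (simp add: power2_norm_eq_inner inner_add_left inner_add_right inner_commute)
  qed
  have int: "integrable M (\<lambda>w. (norm b)\<^sup>2 + 2 * inner (D w) b + (norm (D w))\<^sup>2)"
    using D D2 by auto
  have "(\<integral>\<^sup>+w. ennreal ((norm (a + X w))\<^sup>2) \<partial>M)
      = ennreal (\<integral>w. (norm b)\<^sup>2 + 2 * inner (D w) b + (norm (D w))\<^sup>2 \<partial>M)"
    unfolding pointwise
  proof (rule nn_integral_eq_integral[OF int])
    show "AE w in M. 0 \<le> (norm b)\<^sup>2 + 2 * inner (D w) b + (norm (D w))\<^sup>2"
      unfolding pointwise[symmetric] by simp
  qed
  also have "(\<integral>w. (norm b)\<^sup>2 + 2 * inner (D w) b + (norm (D w))\<^sup>2 \<partial>M)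
      = (norm b)\<^sup>2 + (\<integral>w. (norm (D w))\<^sup>2 \<partial>M)"
    using D D2 by (simp add: prob_space)
  finally show ?thesis
    using var_le by (simp add: b_def ennreal_leI del: ennreal_plus)
qed

end

context sequence_space
begin

lemma nn_integral_comb_seq:
  assumes F: "F \<in> borel_measurable S"
  shows "(\<integral>\<^sup>+\<omega>. F \<omega> \<partial>S) = (\<integral>\<^sup>+\<omega>. (\<integral>\<^sup>+\<omega>'. F (comb_seq i \<omega> \<omega>') \<partial>S) \<partial>S)"
proof -
  have comb: "(\<lambda>(\<omega>, \<omega>'). comb_seq i \<omega> \<omega>') \<in> measurable (S \<Otimes>\<^sub>M S) S"
    by (rule measurable_comb_seq)
  have "(\<integral>\<^sup>+\<omega>. F \<omega> \<partial>S) = (\<integral>\<^sup>+\<omega>. F \<omega> \<partial>distr (S \<Otimes>\<^sub>M S) S (\<lambda>(\<omega>, \<omega>'). comb_seq i \<omega> \<omega>'))"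
    by (simp add: PiM_comb_seq)
  also have "\<dots> = (\<integral>\<^sup>+x. F (comb_seq i (fst x) (snd x)) \<partial>(S \<Otimes>\<^sub>M S))"
    using F by (subst nn_integral_distr[OF comb]) (auto simp: split_beta')
  also have "\<dots> = (\<integral>\<^sup>+\<omega>. (\<integral>\<^sup>+\<omega>'. F (comb_seq i \<omega> \<omega>') \<partial>S) \<partial>S)"
    using P.nn_integral_fst[of "\<lambda>x. F (comb_seq i (fst x) (snd x))"]
      measurable_compose[OF comb F] by (simp add: split_beta')
  finally show ?thesis .
qed

lemma nn_integral_two_coordinates:
  assumes G: "(\<lambda>x. G (fst x) (snd x)) \<in> borel_measurable (M \<Otimes>\<^sub>M M)"
  shows "(\<integral>\<^sup>+\<omega>. G (\<omega> 0) (\<omega> 1) \<partial>S) = (\<integral>\<^sup>+w0. (\<integral>\<^sup>+w1. G w0 w1 \<partial>M) \<partial>M)"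
proof -
  have coord: "(\<lambda>\<omega>. \<omega> i) \<in> measurable S M" for i
    by (rule measurable_component_singleton) simp
  have shift: "(\<lambda>(s, \<omega>). case_nat s \<omega>) \<in> measurable (M \<Otimes>\<^sub>M S) S"
  proof (rule measurable_PiM_single')
    show "(\<lambda>x. (case x of (s, \<omega>) \<Rightarrow> case_nat s \<omega>) i) \<in> measurable (M \<Otimes>\<^sub>M S) M" for i
      by (cases i) (auto simp: split_beta' intro!: measurable_compose[OF measurable_snd coord])
  qed (auto simp: space_PiM space_pair_measure PiE_iff split: nat.split)
  have "(\<integral>\<^sup>+\<omega>. G (\<omega> 0) (\<omega> 1) \<partial>S)
      = (\<integral>\<^sup>+\<omega>. G (\<omega> 0) (\<omega> 1) \<partial>distr (M \<Otimes>\<^sub>M S) S (\<lambda>(s, \<omega>). case_nat s \<omega>))"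
    by (simp add: PiM_iter)
  also have "\<dots> = (\<integral>\<^sup>+x. G (fst x) (snd x 0) \<partial>(M \<Otimes>\<^sub>M S))"
    using measurable_compose[OF measurable_Pair[OF coord coord] G]
    by (subst nn_integral_distr[OF shift]) (auto simp: split_beta' intro!: nn_integral_cong)
  also have "\<dots> = (\<integral>\<^sup>+s. (\<integral>\<^sup>+\<omega>. G s (\<omega> 0) \<partial>S) \<partial>M)"
    using measurable_compose[OF measurable_Pair[OF measurable_fst
        measurable_compose[OF measurable_snd coord]] G]
    by (subst P.nn_integral_fst[symmetric]) simp_all
  also have "\<dots> = (\<integral>\<^sup>+s. (\<integral>\<^sup>+w. G s w \<partial>M) \<partial>M)"
  proof (intro nn_integral_cong)
    fix s assume "s \<in> space M"
    then have "G s \<in> borel_measurable M"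
      using measurable_Pair2[OF G] by simp
    then have "(\<integral>\<^sup>+w. G s w \<partial>distr S M (\<lambda>\<omega>. \<omega> 0)) = (\<integral>\<^sup>+\<omega>. G s (\<omega> 0) \<partial>S)"
      by (intro nn_integral_distr[OF coord]) simp
    moreover have "distr S M (\<lambda>\<omega>. \<omega> 0) = M"
      by (subst distr_PiM_component) (simp_all add: M.prob_space_axioms)
    ultimately show "(\<integral>\<^sup>+\<omega>. G s (\<omega> 0) \<partial>S) = (\<integral>\<^sup>+w. G s w \<partial>M)"
      by simp
  qed
  finally show ?thesis .
qed

end

section \<open>One step of stochastic FBF\<close>

locale sfbf = P: prob_space P for P :: "'w measure" +
  fixes A :: "'a::euclidean_space \<Rightarrow> 'a set"
    and B :: "'a \<Rightarrow> 'a"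
    and Bt :: "'a \<Rightarrow> 'w \<Rightarrow> 'a"
    and L \<mu> \<sigma> :: real
    and zs :: 'a
  assumes A_mm: "maximal_monotone A"
    and B_lip: "L-lipschitz_on UNIV B"
    and mu_pos: "\<mu> > 0"
    and B_sm: "strongly_monotone \<mu> B"
    and zs_zero: "0 \<in> (\<lambda>u. u + B zs) ` A zs"
    and Bt_meas: "(\<lambda>(x, w). Bt x w) \<in> borel_measurable (borel \<Otimes>\<^sub>M P)"
    and Bt_int: "\<And>x. integrable P (Bt x)"
    and Bt_unbiased: "\<And>x. (\<integral>w. Bt x w \<partial>P) = B x"
    and Bt_var: "\<And>x. (\<integral>\<^sup>+w. ennreal ((norm (Bt x w - B x))\<^sup>2) \<partial>P) \<le> ennreal (\<sigma>\<^sup>2)"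
begin

sublocale S: sequence_space P ..

lemma B_lipD: "norm (B x - B y) \<le> L * norm (x - y)"
  using lipschitz_onD[OF B_lip, of x y] by (simp add: dist_norm)

lemma mu_le_L: "\<mu> \<le> L"
proof -
  obtain e :: 'a where "e \<in> Basis"
    using nonempty_Basis by blast
  then have e: "norm (e - 0) = 1"
    by simp
  have "\<mu> * (norm (e - 0))\<^sup>2 \<le> inner (B e - B 0) (e - 0)"
    using B_sm unfolding strongly_monotone_def by blast
  also have "\<dots> \<le> norm (B e - B 0) * norm (e - 0)"
    by (rule norm_cauchy_schwarz)
  also have "\<dots> \<le> L * norm (e - 0) * norm (e - 0)"
    by (intro mult_right_mono B_lipD) simp
  finally show ?thesis
    using e by simp
qed

lemma L_pos: "L > 0"
  using mu_le_L mu_pos by simp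

lemma resolvent_step_inner_le:
  fixes z g :: 'a
  assumes tau: "\<tau> > 0"
  defines "zh \<equiv> resolvent (scale_op \<tau> A) (z - \<tau> *\<^sub>R g)"
  shows "\<tau> * inner (g - B zs) (zh - zs) \<le> inner (z - zh) (zh - zs)"
proof -
  obtain u where u: "u \<in> A zh" "z - \<tau> *\<^sub>R g - zh = \<tau> *\<^sub>R u"
    using resolvent_scale_opE[OF A_mm tau] unfolding zh_def by blast
  obtain u0 where u0: "u0 \<in> A zs" "u0 = - B zs"
    using zs_zero by (metis (no_types, lifting) eq_neg_iff_add_eq_0 image_iff)
  have "inner (u - u0) (zh - zs) \<ge> 0"
    using A_mm u(1) u0(1) unfolding maximal_monotone_def monotone_op_def by blast
  then have "inner (\<tau> *\<^sub>R (u - u0)) (zh - zs) \<ge> 0"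
    using tau by simp
  moreover have "\<tau> *\<^sub>R (u - u0) = (z - zh) - \<tau> *\<^sub>R (g - B zs)"
    using u u0 by (simp add: algebra_simps)
  ultimately show ?thesis
    by (simp add: inner_diff_left)
qed

lemma fbf_step_estimate:
  fixes z g :: 'a
  assumes tau: "\<tau> > 0" "2 * \<tau> * \<mu> + 2 * \<tau>\<^sup>2 * L\<^sup>2 \<le> 1"
  defines "zh \<equiv> resolvent (scale_op \<tau> A) (z - \<tau> *\<^sub>R g)"
  shows "(norm (zh + \<tau> *\<^sub>R g - \<tau> *\<^sub>R B zh - zs))\<^sup>2
    \<le> (1 - \<tau> * \<mu>) * (norm (z - zs))\<^sup>2 + 2 * \<tau>\<^sup>2 * (norm (g - B z))\<^sup>2"
proof -
  define d where "d = zh - zs"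
  define e where "e = z - zh"
  have resolvent_ineq: "\<tau> * inner (g - B zs) d \<le> inner e d"
    using resolvent_step_inner_le[OF tau(1)] unfolding d_def e_def zh_def .
  have "\<mu> * (norm d)\<^sup>2 \<le> inner (B zh - B zs) d"
    using B_sm unfolding strongly_monotone_def d_def by blast
  then have strong_mono: "\<tau> * \<mu> * (norm d)\<^sup>2 \<le> \<tau> * inner (B zh - B zs) d"
    using tau by (simp add: mult.assoc)
  have "(norm (g - B zh))\<^sup>2 \<le> 2 * (norm (g - B z))\<^sup>2 + 2 * (norm (B z - B zh))\<^sup>2"
    using norm_add_sq_le[of "g - B z" "B z - B zh"] by simp
  also have "(norm (B z - B zh))\<^sup>2 \<le> L\<^sup>2 * (norm e)\<^sup>2"
    using B_lipD[of z zh] by (simp add: e_def power_mono flip: power_mult_distrib)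
  finally have lipschitz: "\<tau>\<^sup>2 * (norm (g - B zh))\<^sup>2 \<le> \<tau>\<^sup>2 * (2 * (norm (g - B z))\<^sup>2 + 2 * L\<^sup>2 * (norm e)\<^sup>2)"
    by (simp add: mult_left_mono)
  have "0 \<le> (norm (d - e))\<^sup>2"
    by simp
  then have "2 * inner e d \<le> (norm d)\<^sup>2 + (norm e)\<^sup>2"
    by (simp add: power2_norm_eq_inner inner_diff_left inner_diff_right inner_commute)
  then have cross: "\<tau> * \<mu> * (2 * inner e d) \<le> \<tau> * \<mu> * ((norm d)\<^sup>2 + (norm e)\<^sup>2)"
    using tau mu_pos by (intro mult_left_mono) auto
  have small: "(norm e)\<^sup>2 * (2 * \<tau> * \<mu> + 2 * \<tau>\<^sup>2 * L\<^sup>2) \<le> (norm e)\<^sup>2"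
    using tau by (simp add: mult_left_le)
  have eq: "zh + \<tau> *\<^sub>R g - \<tau> *\<^sub>R B zh - zs = d + \<tau> *\<^sub>R (g - B zh)"
    by (simp add: d_def algebra_simps)
  have lhs: "(norm (zh + \<tau> *\<^sub>R g - \<tau> *\<^sub>R B zh - zs))\<^sup>2
      = (norm d)\<^sup>2 + 2 * \<tau> * inner (g - B zs) d - 2 * \<tau> * inner (B zh - B zs) d + \<tau>\<^sup>2 * (norm (g - B zh))\<^sup>2"
    unfolding eq norm_add_scaleR_sq inner_diff_left by (simp add: algebra_simps)
  have "z - zs = d + e"
    by (simp add: d_def e_def)
  then have rhs: "(norm (z - zs))\<^sup>2 = (norm d)\<^sup>2 + 2 * inner e d + (norm e)\<^sup>2"
    by (simp add: power2_norm_eq_inner inner_add_left inner_add_right inner_commute)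
  show ?thesis
    unfolding lhs rhs
    using resolvent_ineq strong_mono lipschitz cross small by (simp add: algebra_simps)
qed

abbreviation samples :: "(nat \<Rightarrow> 'w) measure" where
  "samples \<equiv> \<Pi>\<^sub>M t\<in>UNIV. P"

definition stepsize :: "nat \<Rightarrow> real" where
  "stepsize t = fbf_step t \<mu> L"

definition half_point :: "nat \<Rightarrow> 'a \<Rightarrow> 'a \<Rightarrow> 'a" where
  "half_point t z g = resolvent (scale_op (stepsize t) A) (z - stepsize t *\<^sub>R g)"

definition update :: "nat \<Rightarrow> 'a \<Rightarrow> 'w \<Rightarrow> 'w \<Rightarrow> 'a" where
  "update t z w0 w1 = half_point t z (Bt z w0) + stepsize t *\<^sub>R Bt z w0
     - stepsize t *\<^sub>R Bt (half_point t z (Bt z w0)) w1"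

lemma fbf_Suc:
  "fbf A Bt \<mu> L z0 \<xi> (Suc t) = update t (fbf A Bt \<mu> L z0 \<xi> t) (\<xi> (2 * t)) (\<xi> (2 * t + 1))"
  by (simp add: Let_def update_def half_point_def stepsize_def)

lemma stepsize_pos: "stepsize t > 0"
  using mu_pos L_pos unfolding stepsize_def fbf_step_def by (simp add: add_pos_pos)

lemma stepsize_mult_L_le: "stepsize t * L \<le> 1 / 3"
proof -
  have "(real t + 1) * \<mu> + 6 * L > 0"
    using mu_pos L_pos by (simp add: add_pos_pos)
  then show ?thesis
    using mu_pos by (simp add: stepsize_def fbf_step_def divide_le_eq)
qed

lemma stepsize_mult_mu_le: "stepsize t * \<mu> \<le> 1 / 3"
  using stepsize_mult_L_le[of t] mu_le_L stepsize_pos[of t]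
  by (meson mult_left_mono less_eq_real_def order_trans)

lemma stepsize_condition: "2 * stepsize t * \<mu> + 2 * (stepsize t)\<^sup>2 * L\<^sup>2 \<le> 1"
proof -
  have "(stepsize t * L)\<^sup>2 \<le> (1 / 3)\<^sup>2"
    using stepsize_mult_L_le[of t] stepsize_pos[of t] L_pos by (intro power_mono) auto
  then have "(stepsize t)\<^sup>2 * L\<^sup>2 \<le> 1 / 9"
    by (simp add: power_mult_distrib power2_eq_square mult_ac)
  then show ?thesis
    using stepsize_mult_mu_le[of t] by linarith
qed

lemma Bt_measurable_compose:
  assumes "f \<in> borel_measurable M" and "w \<in> measurable M P"
  shows "(\<lambda>x. Bt (f x) (w x)) \<in> borel_measurable M"
  using measurable_Pair_compose_split[OF Bt_meas assms] by simp

lemma update_measurable: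
  assumes f: "f \<in> borel_measurable M" and w0: "w0 \<in> measurable M P" and w1: "w1 \<in> measurable M P"
  shows "(\<lambda>x. update t (f x) (w0 x) (w1 x)) \<in> borel_measurable M"
proof -
  have g: "(\<lambda>x. Bt (f x) (w0 x)) \<in> borel_measurable M"
    by (rule Bt_measurable_compose[OF f w0])
  have h: "(\<lambda>x. half_point t (f x) (Bt (f x) (w0 x))) \<in> borel_measurable M"
    unfolding half_point_def
    by (rule borel_measurable_continuous_on[OF continuous_on_resolvent[OF A_mm stepsize_pos]])
       (use f g in measurable)
  show ?thesis
    unfolding update_def using f g h Bt_measurable_compose[OF h w1] by measurable
qed

lemma nn_integral_oracle_step_sq_le:
  "(\<integral>\<^sup>+w. ennreal ((norm (c - \<tau> *\<^sub>R Bt x w))\<^sup>2) \<partial>P) \<le> ennreal ((norm (c - \<tau> *\<^sub>R B x))\<^sup>2 + \<tau>\<^sup>2 * \<sigma>\<^sup>2)"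
proof -
  have X: "integrable P (\<lambda>w. - \<tau> *\<^sub>R Bt x w)"
    using Bt_int by simp
  have "(\<integral>\<^sup>+w. ennreal ((norm (- \<tau> *\<^sub>R Bt x w - - \<tau> *\<^sub>R B x))\<^sup>2) \<partial>P)
      = (\<integral>\<^sup>+w. ennreal (\<tau>\<^sup>2) * ennreal ((norm (Bt x w - B x))\<^sup>2) \<partial>P)"
    by (intro nn_integral_cong)
       (simp add: ennreal_mult[symmetric] power_mult_distrib norm_minus_commute
         flip: scaleR_diff_right)
  also have "\<dots> = ennreal (\<tau>\<^sup>2) * (\<integral>\<^sup>+w. ennreal ((norm (Bt x w - B x))\<^sup>2) \<partial>P)"
    using borel_measurable_integrable[OF Bt_int[of x]] by (intro nn_integral_cmult) simp
  also have "\<dots> \<le> ennreal (\<tau>\<^sup>2 * \<sigma>\<^sup>2)"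
    using Bt_var[of x] by (simp add: ennreal_mult mult_left_mono)
  finally show ?thesis
    using P.nn_integral_norm_sq_le_bias_variance[OF X, of "\<tau>\<^sup>2 * \<sigma>\<^sup>2" c] by (simp add: Bt_unbiased)
qed

lemma nn_integral_update_sq_dist_le:
  "(\<integral>\<^sup>+w0. (\<integral>\<^sup>+w1. ennreal ((norm (update t z w0 w1 - zs))\<^sup>2) \<partial>P) \<partial>P)
     \<le> ennreal ((1 - stepsize t * \<mu>) * (norm (z - zs))\<^sup>2 + 3 * (stepsize t)\<^sup>2 * \<sigma>\<^sup>2)"
proof -
  define \<tau> where "\<tau> = stepsize t"
  define K where "K = (1 - \<tau> * \<mu>) * (norm (z - zs))\<^sup>2 + \<tau>\<^sup>2 * \<sigma>\<^sup>2"
  have K: "K \<ge> 0"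
    unfolding K_def \<tau>_def using stepsize_mult_mu_le[of t] by simp
  have inner: "(\<integral>\<^sup>+w1. ennreal ((norm (update t z w0 w1 - zs))\<^sup>2) \<partial>P)
      \<le> ennreal (K + 2 * \<tau>\<^sup>2 * (norm (Bt z w0 - B z))\<^sup>2)" for w0
  proof -
    define zh where "zh = half_point t z (Bt z w0)"
    define c where "c = zh + \<tau> *\<^sub>R Bt z w0 - zs"
    have "update t z w0 w1 - zs = c - \<tau> *\<^sub>R Bt zh w1" for w1
      by (simp add: update_def zh_def c_def \<tau>_def algebra_simps)
    then have "(\<integral>\<^sup>+w1. ennreal ((norm (update t z w0 w1 - zs))\<^sup>2) \<partial>P)
        = (\<integral>\<^sup>+w1. ennreal ((norm (c - \<tau> *\<^sub>R Bt zh w1))\<^sup>2) \<partial>P)"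
      by simp
    also have "\<dots> \<le> ennreal ((norm (c - \<tau> *\<^sub>R B zh))\<^sup>2 + \<tau>\<^sup>2 * \<sigma>\<^sup>2)"
      by (rule nn_integral_oracle_step_sq_le)
    also have "\<dots> \<le> ennreal (K + 2 * \<tau>\<^sup>2 * (norm (Bt z w0 - B z))\<^sup>2)"
      using fbf_step_estimate[OF stepsize_pos stepsize_condition, of t z "Bt z w0"]
      unfolding K_def c_def zh_def half_point_def \<tau>_def by (intro ennreal_leI) (simp add: algebra_simps)
    finally show ?thesis .
  qed
  have "(\<integral>\<^sup>+w0. (\<integral>\<^sup>+w1. ennreal ((norm (update t z w0 w1 - zs))\<^sup>2) \<partial>P) \<partial>P)
      \<le> (\<integral>\<^sup>+w0. ennreal K + ennreal (2 * \<tau>\<^sup>2) * ennreal ((norm (Bt z w0 - B z))\<^sup>2) \<partial>P)"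
    using inner K by (intro nn_integral_mono) (simp add: ennreal_plus ennreal_mult)
  also have "\<dots> = ennreal K + ennreal (2 * \<tau>\<^sup>2) * (\<integral>\<^sup>+w0. ennreal ((norm (Bt z w0 - B z))\<^sup>2) \<partial>P)"
    using borel_measurable_integrable[OF Bt_int[of z]]
    by (subst nn_integral_add) (auto simp: nn_integral_cmult P.emeasure_space_1)
  also have "\<dots> \<le> ennreal K + ennreal (2 * \<tau>\<^sup>2) * ennreal (\<sigma>\<^sup>2)"
    by (intro add_left_mono mult_left_mono Bt_var) simp
  also have "\<dots> = ennreal ((1 - stepsize t * \<mu>) * (norm (z - zs))\<^sup>2 + 3 * (stepsize t)\<^sup>2 * \<sigma>\<^sup>2)"
    using K by (simp add: ennreal_plus[symmetric] ennreal_mult[symmetric] K_def \<tau>_def algebra_simps)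
  finally show ?thesis .
qed

section \<open>The \<open>O(1/T)\<close> rate\<close>

lemma fbf_measurable: "(\<lambda>\<xi>. fbf A Bt \<mu> L z0 \<xi> t) \<in> borel_measurable samples"
proof (induction t)
  case (Suc t)
  have "(\<lambda>\<xi>. \<xi> i) \<in> measurable samples P" for i
    by (rule measurable_component_singleton) simp
  then show ?case
    unfolding fbf_Suc by (intro update_measurable Suc)
qed simp

lemma fbf_comb_seq:
  "s \<le> t \<Longrightarrow> fbf A Bt \<mu> L z0 (comb_seq (2 * t) \<omega> \<omega>') s = fbf A Bt \<mu> L z0 \<omega> s"
  by (induction s) (simp_all add: fbf_Suc comb_seq_def)

lemma nn_integral_fbf_Suc:
  "(\<integral>\<^sup>+\<xi>. ennreal ((norm (fbf A Bt \<mu> L z0 \<xi> (Suc t) - zs))\<^sup>2) \<partial>samples)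
   = (\<integral>\<^sup>+\<xi>. (\<integral>\<^sup>+w0. (\<integral>\<^sup>+w1. ennreal ((norm (update t (fbf A Bt \<mu> L z0 \<xi> t) w0 w1 - zs))\<^sup>2) \<partial>P) \<partial>P) \<partial>samples)"
proof -
  have split: "fbf A Bt \<mu> L z0 (comb_seq (2 * t) \<omega> \<omega>') (Suc t)
      = update t (fbf A Bt \<mu> L z0 \<omega> t) (\<omega>' 0) (\<omega>' 1)" for \<omega> \<omega>'
    unfolding fbf_Suc fbf_comb_seq[OF order_refl] by (simp add: comb_seq_def)
  have "(\<lambda>\<xi>. ennreal ((norm (fbf A Bt \<mu> L z0 \<xi> (Suc t) - zs))\<^sup>2)) \<in> borel_measurable samples"
    using fbf_measurable by measurable
  then have "(\<integral>\<^sup>+\<xi>. ennreal ((norm (fbf A Bt \<mu> L z0 \<xi> (Suc t) - zs))\<^sup>2) \<partial>samples)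
      = (\<integral>\<^sup>+\<omega>. (\<integral>\<^sup>+\<omega>'. ennreal ((norm (update t (fbf A Bt \<mu> L z0 \<omega> t) (\<omega>' 0) (\<omega>' 1) - zs))\<^sup>2)
           \<partial>samples) \<partial>samples)"
    by (subst S.nn_integral_comb_seq[where i = "2 * t"]) (simp_all only: split)
  also have "\<dots> = (\<integral>\<^sup>+\<xi>. (\<integral>\<^sup>+w0. (\<integral>\<^sup>+w1.
      ennreal ((norm (update t (fbf A Bt \<mu> L z0 \<xi> t) w0 w1 - zs))\<^sup>2) \<partial>P) \<partial>P) \<partial>samples)"
  proof (intro nn_integral_cong S.nn_integral_two_coordinates)
    show "(\<lambda>x. ennreal ((norm (update t z (fst x) (snd x) - zs))\<^sup>2)) \<in> borel_measurable (P \<Otimes>\<^sub>M P)" for z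
      using update_measurable[of "\<lambda>_. z" "P \<Otimes>\<^sub>M P" fst snd t] by measurable
  qed
  finally show ?thesis .
qed

definition mse :: "'a \<Rightarrow> nat \<Rightarrow> ennreal" where
  "mse z0 t = (\<integral>\<^sup>+\<xi>. ennreal ((norm (fbf A Bt \<mu> L z0 \<xi> t - zs))\<^sup>2) \<partial>samples)"

lemma mse_Suc_le:
  "mse z0 (Suc t) \<le> ennreal (1 - stepsize t * \<mu>) * mse z0 t + ennreal (3 * (stepsize t)\<^sup>2 * \<sigma>\<^sup>2)"
proof -
  have contr: "1 - stepsize t * \<mu> \<ge> 0"
    using stepsize_mult_mu_le[of t] by simp
  have "mse z0 (Suc t) \<le> (\<integral>\<^sup>+\<xi>. ennreal ((1 - stepsize t * \<mu>) * (norm (fbf A Bt \<mu> L z0 \<xi> t - zs))\<^sup>2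
      + 3 * (stepsize t)\<^sup>2 * \<sigma>\<^sup>2) \<partial>samples)"
    unfolding mse_def nn_integral_fbf_Suc by (intro nn_integral_mono nn_integral_update_sq_dist_le)
  also have "\<dots> = (\<integral>\<^sup>+\<xi>. ennreal (1 - stepsize t * \<mu>) * ennreal ((norm (fbf A Bt \<mu> L z0 \<xi> t - zs))\<^sup>2)
      + ennreal (3 * (stepsize t)\<^sup>2 * \<sigma>\<^sup>2) \<partial>samples)"
    using contr by (intro nn_integral_cong) (simp add: ennreal_plus ennreal_mult)
  also have "\<dots> = ennreal (1 - stepsize t * \<mu>) * mse z0 t + ennreal (3 * (stepsize t)\<^sup>2 * \<sigma>\<^sup>2)"
    unfolding mse_def using fbf_measurable[of z0 t]
    by (subst nn_integral_add) (auto simp: nn_integral_cmult S.emeasure_space_1)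
  finally show ?thesis .
qed

definition kappa :: real where
  "kappa = 6 * L / \<mu>"

definition noise :: real where
  "noise = 12 * \<sigma>\<^sup>2 / \<mu>\<^sup>2"

text \<open>With \<open>s = t + 1 + \<kappa>\<close> the step size is \<open>2 / (\<mu> s)\<close>, so the contraction factor
  \<open>(s - 2) / s\<close> of the one-step recursion telescopes against the denominator \<open>(s - 1) (s - 2)\<close>.\<close>
definition mse_bound :: "real \<Rightarrow> nat \<Rightarrow> real" where
  "mse_bound r t = (kappa * (kappa - 1) * r + noise * real t) / ((real t + kappa) * (real t + kappa - 1))"

lemma kappa_ge_6: "kappa \<ge> 6"
  using mu_le_L mu_pos unfolding kappa_def by (simp add: le_divide_eq)

lemma noise_nonneg: "noise \<ge> 0"
  unfolding noise_def by simp

lemma stepsize_eq: "stepsize t = 2 / (\<mu> * (real t + 1 + kappa))"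
proof -
  have "(real t + 1) * \<mu> + 6 * L = \<mu> * (real t + 1 + kappa)"
    using mu_pos unfolding kappa_def by (simp add: field_simps)
  then show ?thesis
    by (simp add: stepsize_def fbf_step_def)
qed

lemma mse_bound_nonneg: "r \<ge> 0 \<Longrightarrow> mse_bound r t \<ge> 0"
  unfolding mse_bound_def using kappa_ge_6 noise_nonneg
  by (intro divide_nonneg_pos add_nonneg_nonneg mult_nonneg_nonneg mult_pos_pos) auto

lemma mse_bound_Suc:
  assumes r: "r \<ge> 0"
  shows "(1 - stepsize t * \<mu>) * mse_bound r t + 3 * (stepsize t)\<^sup>2 * \<sigma>\<^sup>2 \<le> mse_bound r (Suc t)"
proof -
  define s where "s = real t + 1 + kappa"
  define n where "n = kappa * (kappa - 1) * r + noise * real t"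
  have s: "s > 2"
    unfolding s_def using kappa_ge_6 by simp
  have n: "n \<ge> 0"
    unfolding n_def using kappa_ge_6 noise_nonneg r by simp
  have tau: "stepsize t = 2 / (\<mu> * s)"
    unfolding stepsize_eq s_def ..
  have 1: "1 - stepsize t * \<mu> = (s - 2) / s"
    using mu_pos s unfolding tau by (simp add: field_simps)
  have 2: "mse_bound r t = n / ((s - 1) * (s - 2))"
    unfolding mse_bound_def s_def n_def by (simp add: algebra_simps)
  have "(s - 2) / s * (n / ((s - 1) * (s - 2))) = ((s - 2) * n) / ((s - 2) * (s * (s - 1)))"
    by (simp add: ac_simps)
  then have contraction: "(1 - stepsize t * \<mu>) * mse_bound r t = n / (s * (s - 1))"
    unfolding 1 2 using s by simp
  have "3 * (stepsize t)\<^sup>2 * \<sigma>\<^sup>2 = noise / s\<^sup>2"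
    using mu_pos s unfolding tau noise_def by (simp add: power2_eq_square field_simps)
  also have "\<dots> \<le> noise / (s * (s - 1))"
    using s noise_nonneg by (intro divide_left_mono) (auto simp: power2_eq_square)
  finally have "(1 - stepsize t * \<mu>) * mse_bound r t + 3 * (stepsize t)\<^sup>2 * \<sigma>\<^sup>2 \<le> (n + noise) / (s * (s - 1))"
    unfolding contraction by (simp add: add_divide_distrib)
  also have "\<dots> = mse_bound r (Suc t)"
    unfolding mse_bound_def s_def n_def by (simp add: algebra_simps)
  finally show ?thesis .
qed

lemma mse_le_mse_bound: "mse z0 t \<le> ennreal (mse_bound ((norm (z0 - zs))\<^sup>2) t)"
proof (induction t)
  case 0
  have "mse_bound r 0 = r" for r
    using kappa_ge_6 unfolding mse_bound_def by simp
  then show ?case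
    unfolding mse_def by (simp add: S.emeasure_space_1)
next
  case (Suc t)
  define r where "r = (norm (z0 - zs))\<^sup>2"
  have "mse z0 (Suc t) \<le> ennreal (1 - stepsize t * \<mu>) * mse z0 t + ennreal (3 * (stepsize t)\<^sup>2 * \<sigma>\<^sup>2)"
    by (rule mse_Suc_le)
  also have "\<dots> \<le> ennreal (1 - stepsize t * \<mu>) * ennreal (mse_bound r t) + ennreal (3 * (stepsize t)\<^sup>2 * \<sigma>\<^sup>2)"
    using Suc.IH unfolding r_def by (intro add_right_mono mult_left_mono) auto
  also have "\<dots> = ennreal ((1 - stepsize t * \<mu>) * mse_bound r t + 3 * (stepsize t)\<^sup>2 * \<sigma>\<^sup>2)"
    using stepsize_mult_mu_le[of t] mse_bound_nonneg[of r t]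
    by (simp add: r_def ennreal_plus ennreal_mult)
  also have "\<dots> \<le> ennreal (mse_bound r (Suc t))"
    by (intro ennreal_leI mse_bound_Suc) (simp add: r_def)
  finally show ?case
    unfolding r_def .
qed

definition rate :: "'a \<Rightarrow> real" where
  "rate z0 = 6 * L / \<mu> * (norm (z0 - zs))\<^sup>2 + 48 * \<sigma>\<^sup>2 / \<mu>\<^sup>2"

lemma rate_nonneg: "rate z0 \<ge> 0"
  unfolding rate_def using L_pos mu_pos by simp

lemma mse_le_rate:
  assumes "T \<ge> 1"
  shows "mse z0 T \<le> ennreal (rate z0 / real T)"
proof -
  define r where "r = (norm (z0 - zs))\<^sup>2"
  define k where "k = kappa"
  define x where "x = real T"
  have k: "k \<ge> 1" and r: "r \<ge> 0" and x: "x \<ge> 1"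
    using kappa_ge_6 assms by (simp_all add: k_def r_def x_def)
  have D: "(x + k) * (x + k - 1) > 0"
    using x k by (intro mult_pos_pos) auto
  have "x * x \<le> (x + k) * (x + k - 1)"
    using x k by (intro mult_mono) auto
  then have "noise * (x * x) \<le> noise * ((x + k) * (x + k - 1))"
    using noise_nonneg by (rule mult_left_mono)
  moreover have "0 \<le> noise * ((x + k) * (x + k - 1))"
    using noise_nonneg D by simp
  ultimately have "noise * x * x \<le> 4 * noise * ((x + k) * (x + k - 1))"
    by (simp add: mult.assoc)
  moreover have "k * (k - 1) * r * x \<le> k * r * ((x + k) * (x + k - 1))"
  proof -
    have "(k - 1) * x \<le> (x + k) * (x + k - 1)"
      using x k by (intro mult_mono) auto
    then have "(k * r) * ((k - 1) * x) \<le> (k * r) * ((x + k) * (x + k - 1))"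
      using k r by (intro mult_left_mono) auto
    then show ?thesis
      by (simp add: mult_ac)
  qed
  ultimately have "(k * (k - 1) * r + noise * x) * x \<le> (k * r + 4 * noise) * ((x + k) * (x + k - 1))"
    by (simp add: algebra_simps)
  then have "mse_bound r T \<le> (kappa * r + 4 * noise) / x"
    using D x unfolding mse_bound_def k_def x_def by (simp add: divide_le_eq le_divide_eq mult_ac)
  also have "\<dots> = rate z0 / real T"
    unfolding rate_def kappa_def noise_def r_def x_def by simp
  finally show ?thesis
    using mse_le_mse_bound[of z0 T] order_trans ennreal_leI unfolding r_def by blast
qed

end

section \<open>The multilevel estimator\<close>

lemma pmf_level_pmf: "i \<ge> 1 \<Longrightarrow> pmf level_pmf i = (1 / 2) ^ i"
proof -
  assume "i \<ge> 1"
  then obtain k where k: "i = Suc k"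
    by (cases i) auto
  have "pmf level_pmf (Suc k) = pmf (geometric_pmf (1 / 2)) k"
    unfolding level_pmf_def by (rule pmf_map_inj') simp
  then show ?thesis
    using k by (simp add: pmf_geometric)
qed

lemma set_pmf_level_pmf: "i \<in> set_pmf level_pmf \<Longrightarrow> i \<ge> 1"
  unfolding level_pmf_def by auto

lemma nn_integral_level_pmf_le:
  assumes f: "\<And>i. i \<ge> 1 \<Longrightarrow> ennreal ((1 / 2) ^ i) * f i
      \<le> ennreal (\<alpha> * (if i \<le> K then 1 else 0) + \<beta> * (1 / 2) ^ i)"
    and "\<alpha> \<ge> 0" "\<beta> \<ge> 0"
  shows "(\<integral>\<^sup>+i. f i \<partial>level_pmf) \<le> ennreal (\<alpha> * real K + \<beta>)"
proof -
  define g where "g k = \<alpha> * (if k < K then 1 else 0) + \<beta> * (1 / 2 :: real) ^ Suc k" for k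
  have "(\<lambda>k. (if k \<in> {..<K} then \<alpha> else 0) + \<beta> * ((1 / 2 :: real) * (1 / 2) ^ k))
      sums ((\<Sum>k<K. \<alpha>) + \<beta> * ((1 / 2) * (1 / (1 - 1 / 2))))"
    by (intro sums_add sums_If_finite_set sums_mult geometric_sums) simp_all
  moreover have "(\<lambda>k. (if k \<in> {..<K} then \<alpha> else 0) + \<beta> * ((1 / 2 :: real) * (1 / 2) ^ k)) = g"
    by (auto simp: g_def fun_eq_iff)
  ultimately have "g sums (\<alpha> * real K + \<beta>)"
    by (simp add: mult.commute)
  moreover have "g k \<ge> 0" for k
    using assms(2,3) by (simp add: g_def)
  ultimately have sum_g: "(\<Sum>k. ennreal (g k)) = ennreal (\<alpha> * real K + \<beta>)"
    by (intro suminf_ennreal_eq)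
  have "(\<integral>\<^sup>+i. f i \<partial>level_pmf) = (\<integral>\<^sup>+k. f (Suc k) \<partial>geometric_pmf (1 / 2))"
    unfolding level_pmf_def by simp
  also have "\<dots> = (\<Sum>k. ennreal ((1 / 2) ^ Suc k) * f (Suc k))"
    by (simp add: nn_integral_measure_pmf nn_integral_count_space_nat pmf_geometric)
  also have "\<dots> \<le> (\<Sum>k. ennreal (g k))"
  proof (rule suminf_le[OF _ summableI summableI])
    fix k
    have "(if Suc k \<le> K then 1 else 0) = (if k < K then 1 else (0::real))"
      by auto
    then show "ennreal ((1 / 2) ^ Suc k) * f (Suc k) \<le> ennreal (g k)"
      using f[of "Suc k"] unfolding g_def by simp
  qed
  finally show ?thesis
    unfolding sum_g .
qed

lemma obtain_floor_log2:
  assumes "N \<ge> (2::nat)"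
  obtains K where "K \<ge> 1" "\<And>i. 2 ^ i \<le> N \<longleftrightarrow> i \<le> K" "real K \<le> log 2 (real N)"
    "real N < 2 * 2 ^ K"
proof -
  obtain K where K: "2 ^ K \<le> N" "N < 2 ^ Suc K"
    using ex_power_ivl1[of 2 N] assms by auto
  have "K \<ge> 1"
    using K assms by (cases K) auto
  moreover have "2 ^ i \<le> N \<longleftrightarrow> i \<le> K" for i
  proof
    assume "2 ^ i \<le> N"
    then have "(2::nat) ^ i < 2 ^ Suc K"
      using K by simp
    then show "i \<le> K"
      using power_less_imp_less_exp[of "2::nat" i "Suc K"] by simp
  next
    assume "i \<le> K"
    then have "(2::nat) ^ i \<le> 2 ^ K"
      by (simp add: power_increasing)
    then show "2 ^ i \<le> N"
      using K(1) by linarith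
  qed
  moreover have "real N < 2 * 2 ^ K"
    using K(2) of_nat_less_iff[of N "2 ^ Suc K", where 'a = real] by simp
  ultimately show ?thesis
    using that le_log2_of_power[OF K(1)] by blast
qed

lemma norm_mlmc_term_sq_le:
  fixes a u v z :: "'a::real_normed_vector"
  shows "(norm (a + c *\<^sub>R (u - v) - z))\<^sup>2
    \<le> 2 * (norm (a - z))\<^sup>2 + 4 * c\<^sup>2 * ((norm (u - z))\<^sup>2 + (norm (v - z))\<^sup>2)"
proof -
  have "(norm (a + c *\<^sub>R (u - v) - z))\<^sup>2 \<le> 2 * (norm (a - z))\<^sup>2 + 2 * (norm (c *\<^sub>R (u - v)))\<^sup>2"
    using norm_add_sq_le[of "a - z" "c *\<^sub>R (u - v)"] by (simp add: algebra_simps)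
  moreover have "(norm (c *\<^sub>R (u - v)))\<^sup>2 = c\<^sup>2 * (norm ((u - z) - (v - z)))\<^sup>2"
    by (simp add: power_mult_distrib)
  moreover have "(norm ((u - z) - (v - z)))\<^sup>2 \<le> 2 * (norm (u - z))\<^sup>2 + 2 * (norm (v - z))\<^sup>2"
    using norm_add_sq_le[of "u - z" "- (v - z)"] by (simp add: norm_minus_commute)
  then have "c\<^sup>2 * (norm ((u - z) - (v - z)))\<^sup>2 \<le> c\<^sup>2 * (2 * (norm (u - z))\<^sup>2 + 2 * (norm (v - z))\<^sup>2)"
    by (rule mult_left_mono) simp
  ultimately show ?thesis
    by (simp add: algebra_simps)
qed

lemma measurable_pmf_pair:
  fixes f :: "'i::countable \<Rightarrow> 'b \<Rightarrow> 'c::topological_space"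
  assumes "\<And>i. f i \<in> borel_measurable M"
  shows "(\<lambda>x. f (fst x) (snd x)) \<in> borel_measurable (measure_pmf p \<Otimes>\<^sub>M M)"
proof (rule measurable_compose_countable[where f = "\<lambda>i x. f i (snd x)" and g = fst])
  show "(\<lambda>x. f i (snd x)) \<in> borel_measurable (measure_pmf p \<Otimes>\<^sub>M M)" for i
    using measurable_compose[OF measurable_snd[of "measure_pmf p" M] assms[of i]] by simp
  show "fst \<in> measurable (measure_pmf p \<Otimes>\<^sub>M M) (count_space UNIV)"
  proof -
    have "(\<lambda>i. i) \<in> measurable (measure_pmf p) (count_space UNIV)"
      by (simp add: measurable_pmf_measure1)
    from measurable_compose[OF measurable_fst this] show ?thesis
      by (simp add: comp_def)
  qed
qed

context sfbf
begin

lemma prob_space_mlmc_space: "prob_space (mlmc_space P)"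
  unfolding mlmc_space_def
  by (intro prob_space_pair prob_space_measure_pmf prob_space_PiM P.prob_space_axioms)

lemma nn_integral_mlmc_space:
  assumes "\<And>i. f i \<in> borel_measurable samples"
  shows "(\<integral>\<^sup>+(i, \<xi>). f i \<xi> \<partial>mlmc_space P) = (\<integral>\<^sup>+i. (\<integral>\<^sup>+\<xi>. f i \<xi> \<partial>samples) \<partial>level_pmf)"
proof -
  have "(\<integral>\<^sup>+(i, \<xi>). f i \<xi> \<partial>mlmc_space P)
      = (\<integral>\<^sup>+x. f (fst x) (snd x) \<partial>(measure_pmf level_pmf \<Otimes>\<^sub>M samples))"
    unfolding mlmc_space_def by (simp add: split_beta')
  also have "\<dots> = (\<integral>\<^sup>+i. (\<integral>\<^sup>+\<xi>. f i \<xi> \<partial>samples) \<partial>level_pmf)"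
    using S.P.nn_integral_fst[OF measurable_pmf_pair[of f samples level_pmf, OF assms]] by simp
  finally show ?thesis .
qed

lemma mlmc_out_measurable: "(\<lambda>\<xi>. mlmc_out A Bt \<mu> L z0 N i \<xi>) \<in> borel_measurable samples"
  unfolding mlmc_out_def Let_def
  using fbf_measurable[of z0 "2 ^ i"] fbf_measurable[of z0 "2 ^ (i - 1)"] fbf_measurable[of z0 "2 ^ 0"]
  by (cases "2 ^ i \<le> N") simp_all

lemma mlmc_out_sq_dist_le:
  fixes z0 :: 'a and \<xi> :: "nat \<Rightarrow> 'w"
  assumes "2 ^ i \<le> N"
  defines "y k \<equiv> fbf A Bt \<mu> L z0 \<xi> (2 ^ k)"
  shows "(norm (mlmc_out A Bt \<mu> L z0 N i \<xi> - zs))\<^sup>2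
    \<le> 2 * (norm (y 0 - zs))\<^sup>2 + 4 * 4 ^ i * ((norm (y i - zs))\<^sup>2 + (norm (y (i - 1) - zs))\<^sup>2)"
proof -
  have "mlmc_out A Bt \<mu> L z0 N i \<xi> = y 0 + (2 ^ i :: real) *\<^sub>R (y i - y (i - 1))"
    using assms unfolding mlmc_out_def Let_def y_def by simp
  moreover have "((2::real) ^ i)\<^sup>2 = 4 ^ i"
    by (simp add: power2_eq_square flip: power_mult_distrib)
  ultimately show ?thesis
    using norm_mlmc_term_sq_le[of "y 0" "2 ^ i" "y i" "y (i - 1)" zs] by simp
qed

lemma nn_integral_mlmc_level_le:
  assumes i: "i \<ge> 1" "2 ^ i \<le> N"
  shows "(\<integral>\<^sup>+\<xi>. ennreal ((norm (mlmc_out A Bt \<mu> L z0 N i \<xi> - zs))\<^sup>2) \<partial>samples)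
    \<le> ennreal ((2 + 12 * 2 ^ i) * rate z0)"
proof -
  define n where "n k \<xi> = ennreal ((norm (fbf A Bt \<mu> L z0 \<xi> (2 ^ k) - zs))\<^sup>2)" for k \<xi>
  have n_measurable: "n k \<in> borel_measurable samples" for k
    unfolding n_def using fbf_measurable by measurable
  have n_mse: "(\<integral>\<^sup>+\<xi>. n k \<xi> \<partial>samples) = mse z0 (2 ^ k)" for k
    unfolding n_def mse_def ..
  have pointwise: "ennreal ((norm (mlmc_out A Bt \<mu> L z0 N i \<xi> - zs))\<^sup>2)
      \<le> 2 * n 0 \<xi> + ennreal (4 * 4 ^ i) * (n i \<xi> + n (i - 1) \<xi>)" for \<xi>
  proof -
    have "ennreal ((norm (mlmc_out A Bt \<mu> L z0 N i \<xi> - zs))\<^sup>2)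
        \<le> ennreal (2 * (norm (fbf A Bt \<mu> L z0 \<xi> (2 ^ 0) - zs))\<^sup>2 + 4 * 4 ^ i *
             ((norm (fbf A Bt \<mu> L z0 \<xi> (2 ^ i) - zs))\<^sup>2 + (norm (fbf A Bt \<mu> L z0 \<xi> (2 ^ (i - 1)) - zs))\<^sup>2))"
      by (intro ennreal_leI mlmc_out_sq_dist_le i(2))
    also have "\<dots> = 2 * n 0 \<xi> + ennreal (4 * 4 ^ i) * (n i \<xi> + n (i - 1) \<xi>)"
      unfolding n_def by (simp add: ennreal_plus ennreal_mult del: fbf.simps)
    finally show ?thesis .
  qed
  have "(\<integral>\<^sup>+\<xi>. ennreal ((norm (mlmc_out A Bt \<mu> L z0 N i \<xi> - zs))\<^sup>2) \<partial>samples)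
      \<le> (\<integral>\<^sup>+\<xi>. 2 * n 0 \<xi> + ennreal (4 * 4 ^ i) * (n i \<xi> + n (i - 1) \<xi>) \<partial>samples)"
    by (intro nn_integral_mono pointwise)
  also have "\<dots> = 2 * mse z0 1 + ennreal (4 * 4 ^ i) * (mse z0 (2 ^ i) + mse z0 (2 ^ (i - 1)))"
    using n_measurable by (simp add: nn_integral_add nn_integral_cmult n_mse)
  also have "\<dots> \<le> 2 * ennreal (rate z0)
      + ennreal (4 * 4 ^ i) * (ennreal (rate z0 / 2 ^ i) + ennreal (rate z0 / 2 ^ (i - 1)))"
    using mse_le_rate[of 1 z0] mse_le_rate[of "2 ^ i" z0] mse_le_rate[of "2 ^ (i - 1)" z0]
    by (intro add_mono mult_left_mono) auto
  also have "\<dots> = ennreal (2 * rate z0 + 4 * 4 ^ i * (rate z0 / 2 ^ i + rate z0 / 2 ^ (i - 1)))"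
    using rate_nonneg[of z0] by (simp add: ennreal_plus ennreal_mult)
  also have "2 * rate z0 + 4 * 4 ^ i * (rate z0 / 2 ^ i + rate z0 / 2 ^ (i - 1)) = (2 + 12 * 2 ^ i) * rate z0"
  proof -
    have "(4::real) ^ i = 2 ^ i * 2 ^ i"
      by (simp flip: power_mult_distrib)
    moreover have "(2::real) ^ i = 2 * 2 ^ (i - 1)"
      using i(1) by (cases i) simp_all
    ultimately show ?thesis
      by (simp add: field_simps)
  qed
  finally show ?thesis .
qed

lemma weighted_mlmc_level_sq_dist_le:
  assumes K: "\<And>i. 2 ^ i \<le> N \<longleftrightarrow> i \<le> K" and i: "i \<ge> 1"
  shows "ennreal ((1 / 2) ^ i) * (\<integral>\<^sup>+\<xi>. ennreal ((norm (mlmc_out A Bt \<mu> L z0 N i \<xi> - zs))\<^sup>2) \<partial>samples)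
    \<le> ennreal (12 * rate z0 * (if i \<le> K then 1 else 0) + 2 * rate z0 * (1 / 2) ^ i)"
proof (cases "i \<le> K")
  case True
  then have "ennreal ((1 / 2) ^ i) * (\<integral>\<^sup>+\<xi>. ennreal ((norm (mlmc_out A Bt \<mu> L z0 N i \<xi> - zs))\<^sup>2) \<partial>samples)
      \<le> ennreal ((1 / 2) ^ i) * ennreal ((2 + 12 * 2 ^ i) * rate z0)"
    using K i by (intro mult_left_mono nn_integral_mlmc_level_le) auto
  also have "\<dots> = ennreal ((1 / 2) ^ i * ((2 + 12 * 2 ^ i) * rate z0))"
    by (rule ennreal_mult[symmetric]) (simp_all add: rate_nonneg)
  also have "(1 / 2) ^ i * ((2 + 12 * 2 ^ i) * rate z0) = 12 * rate z0 + 2 * rate z0 * (1 / 2 :: real) ^ i"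
    by (simp add: algebra_simps flip: power_mult_distrib)
  finally show ?thesis
    using True by simp
next
  case False
  then have "mlmc_out A Bt \<mu> L z0 N i \<xi> = fbf A Bt \<mu> L z0 \<xi> 1" for \<xi>
    using K[of i] by (simp add: mlmc_out_def)
  then have "(\<integral>\<^sup>+\<xi>. ennreal ((norm (mlmc_out A Bt \<mu> L z0 N i \<xi> - zs))\<^sup>2) \<partial>samples) \<le> ennreal (rate z0)"
    using mse_le_rate[of 1 z0] by (simp add: mse_def del: fbf.simps)
  then have "ennreal ((1 / 2) ^ i) * (\<integral>\<^sup>+\<xi>. ennreal ((norm (mlmc_out A Bt \<mu> L z0 N i \<xi> - zs))\<^sup>2) \<partial>samples)
      \<le> ennreal ((1 / 2) ^ i) * ennreal (rate z0)"
    by (rule mult_left_mono) simp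
  also have "\<dots> = ennreal ((1 / 2) ^ i * rate z0)"
    by (rule ennreal_mult[symmetric]) (simp_all add: rate_nonneg)
  also have "\<dots> \<le> ennreal (12 * rate z0 * (if i \<le> K then 1 else 0) + 2 * rate z0 * (1 / 2) ^ i)"
    using False rate_nonneg[of z0] by (intro ennreal_leI) simp
  finally show ?thesis .
qed

lemma mlmc_second_moment:
  assumes N: "N \<ge> 2"
  shows "(\<integral>\<^sup>+(i, \<xi>). ennreal ((norm (mlmc_out A Bt \<mu> L z0 N i \<xi> - zs))\<^sup>2) \<partial>mlmc_space P)
    \<le> ennreal (14 * rate z0 * log 2 (real N))"
proof -
  obtain K where K: "K \<ge> 1" "\<And>i. 2 ^ i \<le> N \<longleftrightarrow> i \<le> K" "real K \<le> log 2 (real N)"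
    using obtain_floor_log2[OF N] by blast
  have r: "rate z0 \<ge> 0"
    by (rule rate_nonneg)
  have "(\<integral>\<^sup>+(i, \<xi>). ennreal ((norm (mlmc_out A Bt \<mu> L z0 N i \<xi> - zs))\<^sup>2) \<partial>mlmc_space P)
      = (\<integral>\<^sup>+i. (\<integral>\<^sup>+\<xi>. ennreal ((norm (mlmc_out A Bt \<mu> L z0 N i \<xi> - zs))\<^sup>2) \<partial>samples) \<partial>level_pmf)"
  proof (rule nn_integral_mlmc_space)
    show "(\<lambda>\<xi>. ennreal ((norm (mlmc_out A Bt \<mu> L z0 N i \<xi> - zs))\<^sup>2)) \<in> borel_measurable samples" for i
      using mlmc_out_measurable[of z0 N i] by measurable
  qed
  also have "\<dots> \<le> ennreal (12 * rate z0 * real K + 2 * rate z0)"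
    using r by (intro nn_integral_level_pmf_le weighted_mlmc_level_sq_dist_le K(2)) auto
  also have "\<dots> \<le> ennreal (14 * rate z0 * log 2 (real N))"
  proof (intro ennreal_leI)
    have "2 * rate z0 * 1 \<le> 2 * rate z0 * real K"
      using K(1) r by (intro mult_left_mono) auto
    moreover have "14 * rate z0 * real K \<le> 14 * rate z0 * log 2 (real N)"
      using K(3) r by (intro mult_left_mono) auto
    ultimately show "12 * rate z0 * real K + 2 * rate z0 \<le> 14 * rate z0 * log 2 (real N)"
      by linarith
  qed
  finally show ?thesis .
qed

lemma mlmc_expected_calls:
  assumes n: "n \<ge> 2"
  shows "(\<integral>\<^sup>+(i, \<xi>). ennreal (real (mlmc_calls n i)) \<partial>mlmc_space P) \<le> ennreal (4 * log 2 (real n))"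
proof -
  obtain K where K: "K \<ge> 1" "\<And>i. 2 ^ i \<le> n \<longleftrightarrow> i \<le> K" "real K \<le> log 2 (real n)"
    using obtain_floor_log2[OF n] by blast
  have "(\<integral>\<^sup>+(i, \<xi>). ennreal (real (mlmc_calls n i)) \<partial>mlmc_space P)
      = (\<integral>\<^sup>+i. ennreal (real (mlmc_calls n i)) \<partial>level_pmf)"
    by (subst nn_integral_mlmc_space) (simp_all add: S.emeasure_space_1)
  also have "\<dots> \<le> ennreal (2 * real K + 2)"
  proof (rule nn_integral_level_pmf_le)
    fix i :: nat
    have "(1 / 2) ^ i * real (mlmc_calls n i) = (if i \<le> K then 2 else 2 * (1 / 2) ^ i)"
      using K(2)[of i] by (simp add: mlmc_calls_def flip: power_mult_distrib)
    then show "ennreal ((1 / 2) ^ i) * ennreal (real (mlmc_calls n i))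
        \<le> ennreal (2 * (if i \<le> K then 1 else 0) + 2 * (1 / 2) ^ i)"
      by (simp add: ennreal_mult[symmetric])
  qed auto
  also have "\<dots> \<le> ennreal (4 * log 2 (real n))"
    using K(1,3) by (intro ennreal_leI) simp
  finally show ?thesis .
qed

lemma mlmc_out_integrable:
  assumes "N \<ge> 2"
  shows "integrable (mlmc_space P) (\<lambda>(i, \<xi>). mlmc_out A Bt \<mu> L z0 N i \<xi>)"
proof -
  interpret M: prob_space "mlmc_space P"
    by (rule prob_space_mlmc_space)
  have "(\<lambda>x. mlmc_out A Bt \<mu> L z0 N (fst x) (snd x)) \<in> borel_measurable (mlmc_space P)"
    unfolding mlmc_space_def by (rule measurable_pmf_pair[OF mlmc_out_measurable])
  moreover have "(\<integral>\<^sup>+x. ennreal ((norm (mlmc_out A Bt \<mu> L z0 N (fst x) (snd x) - zs))\<^sup>2) \<partial>mlmc_space P) < \<infinity>"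
    using mlmc_second_moment[OF assms, of z0] by (simp add: split_beta' le_less_trans)
  ultimately show ?thesis
    by (simp add: split_beta' M.integrable_of_nn_integral_sq_dist(1))
qed

lemma integral_level_pmf_mlmc_out:
  assumes K: "\<And>i. 2 ^ i \<le> N \<longleftrightarrow> i \<le> K"
  shows "measure_pmf.expectation level_pmf (\<lambda>i. mlmc_out A Bt \<mu> L z0 N i \<xi>) = fbf A Bt \<mu> L z0 \<xi> (2 ^ K)"
proof -
  define y where "y k = fbf A Bt \<mu> L z0 \<xi> (2 ^ k)" for k
  define h where "h i = (if 2 ^ i \<le> N then (2 ^ i :: real) *\<^sub>R (y i - y (i - 1)) else 0)" for i
  have out: "mlmc_out A Bt \<mu> L z0 N i \<xi> = y 0 + h i" for i
    unfolding mlmc_out_def Let_def h_def y_def by simp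
  have "h ` UNIV \<subseteq> insert 0 (h ` {..K})"
    using K by (auto simp: h_def)
  then have "integrable level_pmf h"
    by (intro measure_pmf.finite_borel_measurable_integrable) (auto intro: finite_subset)
  then have "measure_pmf.expectation level_pmf (\<lambda>i. mlmc_out A Bt \<mu> L z0 N i \<xi>)
      = y 0 + measure_pmf.expectation level_pmf h"
    by (simp add: out)
  also have "measure_pmf.expectation level_pmf h = (\<Sum>i\<in>Suc ` {..<K}. pmf level_pmf i *\<^sub>R h i)"
  proof (rule integral_measure_pmf)
    show "i \<in> Suc ` {..<K}" if "i \<in> set_pmf level_pmf" "h i \<noteq> 0" for i
      using set_pmf_level_pmf[OF that(1)] that(2) K[of i] by (cases i) (auto simp: h_def)
  qed simp
  also have "\<dots> = (\<Sum>k<K. pmf level_pmf (Suc k) *\<^sub>R h (Suc k))"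
    by (simp add: sum.reindex)
  also have "\<dots> = (\<Sum>k<K. y (Suc k) - y k)"
  proof (rule sum.cong[OF refl])
    fix k assume "k \<in> {..<K}"
    then have "2 ^ Suc k \<le> N"
      using K[of "Suc k"] by simp
    then show "pmf level_pmf (Suc k) *\<^sub>R h (Suc k) = y (Suc k) - y k"
      by (simp add: pmf_level_pmf h_def flip: power_mult_distrib)
  qed
  also have "\<dots> = y K - y 0"
    by (rule sum_lessThan_telescope)
  finally show ?thesis
    unfolding y_def by simp
qed

lemma integral_mlmc_out:
  assumes N: "N \<ge> 2" and K: "\<And>i. 2 ^ i \<le> N \<longleftrightarrow> i \<le> K"
  shows "(\<integral>(i, \<xi>). mlmc_out A Bt \<mu> L z0 N i \<xi> \<partial>mlmc_space P) = (\<integral>\<xi>. fbf A Bt \<mu> L z0 \<xi> (2 ^ K) \<partial>samples)"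
proof -
  interpret pair_sigma_finite "measure_pmf level_pmf" samples
    by unfold_locales
  have "(\<integral>(i, \<xi>). mlmc_out A Bt \<mu> L z0 N i \<xi> \<partial>mlmc_space P)
      = (\<integral>\<xi>. measure_pmf.expectation level_pmf (\<lambda>i. mlmc_out A Bt \<mu> L z0 N i \<xi>) \<partial>samples)"
    using integral_snd[OF mlmc_out_integrable[OF N, of z0, unfolded mlmc_space_def]]
    unfolding mlmc_space_def by simp
  then show ?thesis
    unfolding integral_level_pmf_mlmc_out[OF K] .
qed

lemma fbf_square_integrable:
  shows "integrable samples (\<lambda>\<xi>. fbf A Bt \<mu> L z0 \<xi> T)"
    and "integrable samples (\<lambda>\<xi>. (norm (fbf A Bt \<mu> L z0 \<xi> T - zs))\<^sup>2)"
proof -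
  have "mse z0 T < \<infinity>"
    using mse_le_mse_bound[of z0 T] by (simp add: le_less_trans)
  then show "integrable samples (\<lambda>\<xi>. fbf A Bt \<mu> L z0 \<xi> T)"
    and "integrable samples (\<lambda>\<xi>. (norm (fbf A Bt \<mu> L z0 \<xi> T - zs))\<^sup>2)"
    using S.P.integrable_of_nn_integral_sq_dist[OF fbf_measurable] unfolding mse_def by auto
qed

lemma integral_sq_dist_le_rate:
  assumes "T \<ge> 1"
  shows "(\<integral>\<xi>. (norm (fbf A Bt \<mu> L z0 \<xi> T - zs))\<^sup>2 \<partial>samples) \<le> rate z0 / T"
proof -
  have "ennreal (\<integral>\<xi>. (norm (fbf A Bt \<mu> L z0 \<xi> T - zs))\<^sup>2 \<partial>samples) = mse z0 T"
    unfolding mse_def using fbf_square_integrable(2) by (intro nn_integral_eq_integral[symmetric]) auto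
  also have "\<dots> \<le> ennreal (rate z0 / T)"
    using mse_le_rate[OF assms] .
  finally show ?thesis
    using rate_nonneg[of z0] by (simp add: ennreal_le_iff)
qed

lemma mlmc_bias:
  assumes N: "N \<ge> 2"
  shows "(norm ((\<integral>(i, \<xi>). mlmc_out A Bt \<mu> L z0 N i \<xi> \<partial>mlmc_space P) - zs))\<^sup>2 \<le> 2 * rate z0 / real N"
proof -
  obtain K where K: "\<And>i. 2 ^ i \<le> N \<longleftrightarrow> i \<le> K" "real N < 2 * 2 ^ K"
    using obtain_floor_log2[OF N] by blast
  have mean: "(\<integral>(i, \<xi>). mlmc_out A Bt \<mu> L z0 N i \<xi> \<partial>mlmc_space P) - zs
      = (\<integral>\<xi>. fbf A Bt \<mu> L z0 \<xi> (2 ^ K) - zs \<partial>samples)"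
    using fbf_square_integrable(1) by (simp add: integral_mlmc_out[OF N K(1)] S.P.prob_space)
  have "(norm ((\<integral>(i, \<xi>). mlmc_out A Bt \<mu> L z0 N i \<xi> \<partial>mlmc_space P) - zs))\<^sup>2
      \<le> (\<integral>\<xi>. (norm (fbf A Bt \<mu> L z0 \<xi> (2 ^ K) - zs))\<^sup>2 \<partial>samples)"
    unfolding mean using fbf_square_integrable by (intro S.P.norm_integral_sq_le) auto
  also have "\<dots> \<le> rate z0 / 2 ^ K"
    using integral_sq_dist_le_rate[of "2 ^ K" z0] by simp
  also have "\<dots> \<le> 2 * rate z0 / real N"
  proof -
    have "rate z0 * real N \<le> rate z0 * (2 * 2 ^ K)"
      using K(2) rate_nonneg[of z0] by (intro mult_left_mono) auto
    then show ?thesis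
      using N by (simp add: divide_le_eq le_divide_eq algebra_simps)
  qed
  finally show ?thesis .
qed

end

theorem lemmaC9:
  fixes A :: "'a::euclidean_space \<Rightarrow> 'a set"
    and B :: "'a \<Rightarrow> 'a"
    and P :: "'w measure"
    and Bt :: "'a \<Rightarrow> 'w \<Rightarrow> 'a"
    and L\<^sub>B \<mu> \<sigma> :: real
    and z0 zs :: 'a
    and N :: nat
  assumes A_mm: "maximal_monotone A"
    and B_lip: "L\<^sub>B-lipschitz_on UNIV B"
    and mu_pos: "\<mu> > 0"
    and B_sm: "strongly_monotone \<mu> B"
    and zs_zero: "0 \<in> (\<lambda>u. u + B zs) ` A zs"
    and P_prob: "prob_space P"
    and Bt_meas: "(\<lambda>(x, w). Bt x w) \<in> borel_measurable (borel \<Otimes>\<^sub>M P)"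
    and Bt_int: "\<And>x. integrable P (Bt x)"
    and Bt_unbiased: "\<And>x. (\<integral>w. Bt x w \<partial>P) = B x"
    and Bt_var: "\<And>x. (\<integral>\<^sup>+w. ennreal ((norm (Bt x w - B x))\<^sup>2) \<partial>P) \<le> ennreal (\<sigma>\<^sup>2)"
    and N_ge: "N \<ge> 2"
  shows "integrable (mlmc_space P) (\<lambda>(i, \<xi>). mlmc_out A Bt \<mu> L\<^sub>B z0 N i \<xi>)
       \<and> (norm ((\<integral>(i, \<xi>). mlmc_out A Bt \<mu> L\<^sub>B z0 N i \<xi> \<partial>mlmc_space P) - zs))\<^sup>2
           \<le> (12 * L\<^sub>B / \<mu> * (norm (z0 - zs))\<^sup>2 + 96 * \<sigma>\<^sup>2 / \<mu>\<^sup>2) / real N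
       \<and> (\<integral>\<^sup>+(i, \<xi>). ennreal ((norm (mlmc_out A Bt \<mu> L\<^sub>B z0 N i \<xi> - zs))\<^sup>2) \<partial>mlmc_space P)
           \<le> ennreal (14 * (6 * L\<^sub>B / \<mu> * (norm (z0 - zs))\<^sup>2 + 48 * \<sigma>\<^sup>2 / \<mu>\<^sup>2) * log 2 (real N))
       \<and> (\<exists>C. \<forall>n\<ge>2. (\<integral>\<^sup>+(i, \<xi>). ennreal (real (mlmc_calls n i)) \<partial>mlmc_space P)
                        \<le> ennreal (C * log 2 (real n)))"
proof -
  interpret sfbf P A B Bt L\<^sub>B \<mu> \<sigma> zs
    using assms unfolding sfbf_def sfbf_axioms_def by blast
  have double_rate: "2 * rate z0 = 12 * L\<^sub>B / \<mu> * (norm (z0 - zs))\<^sup>2 + 96 * \<sigma>\<^sup>2 / \<mu>\<^sup>2"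
    unfolding rate_def by (simp add: algebra_simps)
  show ?thesis
    using mlmc_out_integrable[OF N_ge] mlmc_bias[OF N_ge, of z0, unfolded double_rate]
      mlmc_second_moment[OF N_ge, of z0, unfolded rate_def] mlmc_expected_calls by blast
qed

end
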